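(* Suppose Assumptions 3 and 6 hold and fix a positive integer $N$. Then for every sufficiently large $n$, $$\begin{aligned}R_n(\mathbf w_{n,N}^* )=\ &\mathrm{tr}(\mathbf P_1\boldsymbol\Omega)+\boldsymbol\mu^\top(\mathbf I_n-\mathbf P_{M_n})\boldsymbol\mu\\ &+\sum_{i=i_{n,N}+1}^{N}\ \sum_{m=m_n(\frac{2i+1}{2N})+1}^{m_n(\frac{2i-1}{2N})}\Big[\big(\tfrac iN\big)^2 b_m+\big(1-\tfrac iN\big)^2 a_m\Big]\\ &+\sum_{m=m_n(\frac{2i_{n,N}+1}{2N})+1}^{M_n}\Big[\big(\tfrac{i_{n,N}}N\big)^2 b_m+\big(1-\tfrac{i_{n,N}}N\big)^2 a_m\Big],\end{aligned}$$ where sums with upper limit smaller than lower limit are zero. Equivalently, $$R_n(\mathbf w_{n,N}^* )=R_n(\mathbf w_n^* )+\sum_{m=2}^{M_n}(a_m+b_m)\sum_{i=0}^{N}\Big(\tfrac iN-\gamma_{n,m}^*\Big)^2\,\mathbf 1\Big\{\tfrac{2i-1}{2N}<\gamma_{n,m}^*\le\tfrac{2i+1}{2N}\Big\}.$$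
   Context: Setting. For each sample size $n$ one observes $\mathbf y=\boldsymbol\mu+\boldsymbol\varepsilon\in\mathbb R^n$ with $\boldsymbol\mu=\mathbf X\boldsymbol\beta$, where $\mathbf X$ is a nonstochastic $n\times p_n$ matrix with $p_n<n$, $E(\boldsymbol\varepsilon)=\mathbf 0$, $\mathrm{Cov}(\boldsymbol\varepsilon)=\boldsymbol\Omega$ positive definite. Fix integers $0=\nu_0<\nu_1<\cdots<\nu_{q_n}=p_n$; $\mathbf X_m$ is the matrix of the first $\nu_m$ columns of $\mathbf X$ (full column rank), $\mathbf P_m=\mathbf X_m(\mathbf X_m^\top\mathbf X_m)^{-1}\mathbf X_m^\top$, $\mathbf P_0=\mathbf 0$. Candidate models $m\in\{1,\dots,M_n\}$, $2\le M_n\le q_n$. $R_n(m)=E\|\mathbf P_m\mathbf y-\boldsymbol\mu\|^2$, $R_n(\mathbf w)=E\|\sum_{m=1}^{M_n}w_m\mathbf P_m\mathbf y-\boldsymbol\mu\|^2$. $\mathcal W_n=\{\mathbf w\in[0,1]^{M_n}:\sum_m w_m=1\}$, $\mathcal W_n(N)=\{\mathbf w:w_m\in\{0,1/N,\dots,1\},\sum_m w_m=1\}$; $\mathbf w_n^*$ and $\mathbf w_{n,N}^*$ minimize $R_n(\mathbf w)$ over $\mathcal W_n$ and $\mathcal W_n(N)$ respectively. Write $a_m=\boldsymbol\mu^\top(\mathbf P_m-\mathbf P_{m-1})\boldsymbol\mu$, $b_m=\mathrm{tr}\{(\mathbf P_m-\mathbf P_{m-1})\boldsymbol\Omega\}$,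 $\theta_{n,m}=a_m/(n b_m)$, $d_n=\max\{m:\theta_{n,m}>0\}$. Define $\gamma_{n,1}^*=1$ and $\gamma_{n,m}^*=\dfrac{a_m}{a_m+b_m}=\dfrac{\theta_{n,m}}{\theta_{n,m}+1/n}$ for $m\ge2$; $i_{n,N}=\lceil N\gamma_{n,M_n}^*-\tfrac12\rceil$. For $z\in(0,1)$, $m_n(z)=\max\big(\{1\}\cup\{m\in\{2,\dots,q_n\}:\theta_{n,m}>\tfrac{z}{(1-z)n}\}\big)$ (under Assumption 3 this is the index satisfying $\theta_{n,m_n(z)}>\frac{z}{(1-z)n}\ge\theta_{n,m_n(z)+1}$), and $m_n(z)=1$ for $z\ge1$. Assumption 3: for each large $n$, $\theta_{n,1}\ge\cdots\ge\theta_{n,q_n}$. Assumption 6: for each large $n$ there is $m_n'\in\{1,\dots,d_n-1\}$ with $R_n(m)<R_n(m-1)$ for $2\le m\le m_n'$, $R_n(m)\ge R_n(m-1)$ for $m_n'<m\le d_n$, and $R_n(d_n)>R_n(d_n-1)$. *)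

theory Defs
  imports "HOL-Probability.Probability" "Jordan_Normal_Form.Gauss_Jordan_Elimination"
begin

text \<open>Per-sample-size objects. A design matrix X (n x p), the block boundaries nu,
 coefficient vector beta, error covariance Omega. n is dim_row X.\<close>

definition trace_mat :: "real mat \<Rightarrow> real" where
  "trace_mat A = (\<Sum>i<dim_row A. A $$ (i, i))"

definition firstcols :: "real mat \<Rightarrow> nat \<Rightarrow> real mat" where
  "firstcols X k = mat (dim_row X) k (\<lambda>(i, j). X $$ (i, j))"

definition projm :: "real mat \<Rightarrow> nat \<Rightarrow> real mat" where
  "projm X k = (let Xk = firstcols X k in
      Xk * the (mat_inverse (transpose_mat Xk * Xk)) * transpose_mat Xk)"

definition Pm :: "real mat \<Rightarrow> (nat \<Rightarrow> nat) \<Rightarrow> nat \<Rightarrow> real mat" where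
  "Pm X \<nu> m = (if m = 0 then 0\<^sub>m (dim_row X) (dim_row X) else projm X (\<nu> m))"

definition a_coef :: "real mat \<Rightarrow> (nat \<Rightarrow> nat) \<Rightarrow> real vec \<Rightarrow> nat \<Rightarrow> real" where
  "a_coef X \<nu> \<beta> m = (let \<mu> = X *\<^sub>v \<beta> in \<mu> \<bullet> ((Pm X \<nu> m - Pm X \<nu> (m - 1)) *\<^sub>v \<mu>))"

definition b_coef :: "real mat \<Rightarrow> (nat \<Rightarrow> nat) \<Rightarrow> real mat \<Rightarrow> nat \<Rightarrow> real" where
  "b_coef X \<nu> \<Omega> m = trace_mat ((Pm X \<nu> m - Pm X \<nu> (m - 1)) * \<Omega>)"

definition theta :: "real mat \<Rightarrow> (nat \<Rightarrow> nat) \<Rightarrow> real vec \<Rightarrow> real mat \<Rightarrow> nat \<Rightarrow> real" where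
  "theta X \<nu> \<beta> \<Omega> m = a_coef X \<nu> \<beta> m / (real (dim_row X) * b_coef X \<nu> \<Omega> m)"

definition d_idx :: "real mat \<Rightarrow> (nat \<Rightarrow> nat) \<Rightarrow> real vec \<Rightarrow> real mat \<Rightarrow> nat \<Rightarrow> nat" where
  "d_idx X \<nu> \<beta> \<Omega> q = Max {m \<in> {1..q}. theta X \<nu> \<beta> \<Omega> m > 0}"

definition gamma_star :: "real mat \<Rightarrow> (nat \<Rightarrow> nat) \<Rightarrow> real vec \<Rightarrow> real mat \<Rightarrow> nat \<Rightarrow> real" where
  "gamma_star X \<nu> \<beta> \<Omega> m = (if m = 1 then 1 else
     a_coef X \<nu> \<beta> m / (a_coef X \<nu> \<beta> m + b_coef X \<nu> \<Omega> m))"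

definition i_idx :: "real mat \<Rightarrow> (nat \<Rightarrow> nat) \<Rightarrow> real vec \<Rightarrow> real mat \<Rightarrow> nat \<Rightarrow> nat \<Rightarrow> int" where
  "i_idx X \<nu> \<beta> \<Omega> M N = \<lceil>real N * gamma_star X \<nu> \<beta> \<Omega> M - 1 / 2\<rceil>"

definition m_of :: "real mat \<Rightarrow> (nat \<Rightarrow> nat) \<Rightarrow> real vec \<Rightarrow> real mat \<Rightarrow> nat \<Rightarrow> real \<Rightarrow> nat" where
  "m_of X \<nu> \<beta> \<Omega> q z = (if z \<ge> 1 then 1 else
     Max ({1} \<union> {m \<in> {2..q}. theta X \<nu> \<beta> \<Omega> m > z / ((1 - z) * real (dim_row X))}))"

definition risk :: "'a measure \<Rightarrow> ('a \<Rightarrow> real vec) \<Rightarrow> real mat \<Rightarrow> real vec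
    \<Rightarrow> (real vec \<Rightarrow> real vec) \<Rightarrow> real" where
  "risk P eps X \<beta> est = (let \<mu> = X *\<^sub>v \<beta> in
     integral\<^sup>L P (\<lambda>\<omega>. \<Sum>i<dim_row X. (est (\<mu> + eps \<omega>) $ i - \<mu> $ i)\<^sup>2))"

definition risk_model :: "'a measure \<Rightarrow> ('a \<Rightarrow> real vec) \<Rightarrow> real mat \<Rightarrow> (nat \<Rightarrow> nat)
    \<Rightarrow> real vec \<Rightarrow> nat \<Rightarrow> real" where
  "risk_model P eps X \<nu> \<beta> m = risk P eps X \<beta> (\<lambda>y. Pm X \<nu> m *\<^sub>v y)"

definition risk_weight :: "'a measure \<Rightarrow> ('a \<Rightarrow> real vec) \<Rightarrow> real mat \<Rightarrow> (nat \<Rightarrow> nat)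
    \<Rightarrow> real vec \<Rightarrow> nat \<Rightarrow> (nat \<Rightarrow> real) \<Rightarrow> real" where
  "risk_weight P eps X \<nu> \<beta> M w = risk P eps X \<beta>
     (\<lambda>y. vec (dim_row X) (\<lambda>i. \<Sum>m\<in>{1..M}. w m * (Pm X \<nu> m *\<^sub>v y) $ i))"

definition weights :: "nat \<Rightarrow> (nat \<Rightarrow> real) set" where
  "weights M = {w. (\<forall>m\<in>{1..M}. 0 \<le> w m \<and> w m \<le> 1) \<and> (\<forall>m. m \<notin> {1..M} \<longrightarrow> w m = 0)
      \<and> (\<Sum>m\<in>{1..M}. w m) = 1}"

definition weights_grid :: "nat \<Rightarrow> nat \<Rightarrow> (nat \<Rightarrow> real) set" where
  "weights_grid M N = {w \<in> weights M. \<forall>m\<in>{1..M}. \<exists>k\<in>{0..N}. w m = real k / real N}"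

definition pos_def_mat :: "real mat \<Rightarrow> bool" where
  "pos_def_mat A \<longleftrightarrow> (\<exists>n. A \<in> carrier_mat n n \<and> transpose_mat A = A \<and>
      (\<forall>v\<in>carrier_vec n. v \<noteq> 0\<^sub>v n \<longrightarrow> v \<bullet> (A *\<^sub>v v) > 0))"

end

theory Submission
  imports Defs "Jordan_Normal_Form.Determinant"
begin

text \<open>Write \<open>T\<^sub>m = w\<^sub>m + \<dots> + w\<^sub>M\<close> for the tail sums of a weight vector \<open>w\<close>. The projections
  are nested, \<open>P\<^sub>j P\<^sub>k = P\<^sub>m\<^sub>i\<^sub>n\<^sub>(\<^sub>j\<^sub>,\<^sub>k\<^sub>)\<close>, so the risk of the averaged estimator splits over the
  increments of the models:
  \<open>R(w) = tr(P\<^sub>1 \<Omega>) + \<mu>\<^sup>T(I - P\<^sub>M)\<mu> + \<Sum>\<^bsub>m \<ge> 2\<^esub> (T\<^sub>m\<^sup>2 b\<^sub>m + (1 - T\<^sub>m)\<^sup>2 a\<^sub>m)\<close>,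
  and each summand equals \<open>(a\<^sub>m + b\<^sub>m)(T\<^sub>m - \<gamma>\<^sub>m)\<^sup>2 + a\<^sub>m b\<^sub>m / (a\<^sub>m + b\<^sub>m)\<close>.
  The tail-sum sequences of weight vectors are exactly the antitone sequences in \<open>[0, 1]\<close>
  starting with \<open>T\<^sub>1 = 1\<close>, with values in \<open>\<int>/N\<close> for the grid weights. Assumption 3 makes
  \<open>\<gamma>\<^sub>m\<close> antitone, hence also its nearest grid point \<open>\<lceil>N \<gamma>\<^sub>m - 1/2\<rceil> / N\<close>, so both risks are
  minimised term by term. Grouping the models by that nearest grid point \<open>i/N\<close>, which by the
  definition of \<open>m\<^sub>n(z)\<close> means \<open>m\<^sub>n((2i+1)/2N) < m \<le> m\<^sub>n((2i-1)/2N)\<close>, gives the stated formula.\<close>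

section \<open>Matrices and hat matrices\<close>

lemma trace_mat_carrier: "A \<in> carrier_mat n n \<Longrightarrow> trace_mat A = (\<Sum>i<n. A $$ (i, i))"
  unfolding trace_mat_def by simp

lemma trace_mat_minus:
  "A \<in> carrier_mat n n \<Longrightarrow> B \<in> carrier_mat n n \<Longrightarrow> trace_mat (A - B) = trace_mat A - trace_mat B"
  by (simp add: trace_mat_def sum_subtractf)

lemma index_mult_mat_sum:
  assumes "A \<in> carrier_mat n k" "B \<in> carrier_mat k m" "i < n" "j < m"
  shows "(A * B) $$ (i, j) = (\<Sum>l<k. A $$ (i, l) * B $$ (l, j))"
  using assms by (auto simp: scalar_prod_def atLeast0LessThan intro!: sum.cong)

lemma index_mult_mat_vec_sum:
  assumes "A \<in> carrier_mat n k" "v \<in> carrier_vec k" "i < n"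
  shows "(A *\<^sub>v v) $ i = (\<Sum>l<k. A $$ (i, l) * v $ l)"
  using assms by (auto simp: scalar_prod_def atLeast0LessThan intro!: sum.cong)

lemma scalar_prod_mult_mat_vec_sum:
  assumes "A \<in> carrier_mat n n" "v \<in> carrier_vec n" "w \<in> carrier_vec n"
  shows "v \<bullet> (A *\<^sub>v w) = (\<Sum>i<n. v $ i * (\<Sum>k<n. A $$ (i, k) * w $ k))"
  using assms by (auto simp: scalar_prod_def atLeast0LessThan intro!: sum.cong)

lemma trace_mat_mult_comm:
  assumes A: "A \<in> carrier_mat n k" and B: "B \<in> carrier_mat k n"
  shows "trace_mat (A * B) = trace_mat (B * A)"
proof -
  have "trace_mat (A * B) = (\<Sum>i<n. \<Sum>l<k. A $$ (i, l) * B $$ (l, i))"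
    using assms by (simp add: trace_mat_carrier[of _ n] index_mult_mat_sum[OF A B] del: index_mult_mat)
  also have "\<dots> = (\<Sum>l<k. \<Sum>i<n. B $$ (l, i) * A $$ (i, l))"
    by (subst sum.swap) (simp add: mult.commute)
  also have "\<dots> = trace_mat (B * A)"
    using assms by (simp add: trace_mat_carrier[of _ k] index_mult_mat_sum[OF B A] del: index_mult_mat)
  finally show ?thesis .
qed

lemma scalar_prod_self_eq_zero:
  fixes v :: "real vec"
  assumes "v \<in> carrier_vec n" "v \<bullet> v = 0"
  shows "v = 0\<^sub>v n"
proof -
  have "(\<Sum>i\<in>{0..<n}. v $ i * v $ i) = 0"
    using assms unfolding scalar_prod_def by simp
  then have "\<forall>i\<in>{0..<n}. v $ i * v $ i = 0"
    by (subst sum_nonneg_eq_0_iff[symmetric]) auto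
  then show ?thesis
    using assms by (auto intro!: eq_vecI)
qed

lemma gram_mat_invertible:
  fixes Y :: "real mat"
  assumes Y: "Y \<in> carrier_mat n k"
    and ker: "\<forall>v\<in>carrier_vec k. Y *\<^sub>v v = 0\<^sub>v n \<longrightarrow> v = 0\<^sub>v k"
  shows "transpose_mat Y * Y \<in> Units (ring_mat TYPE(real) k k)"
proof -
  let ?G = "transpose_mat Y * Y"
  have G: "?G \<in> carrier_mat k k" using Y by auto
  have "?G *\<^sub>v v \<noteq> 0\<^sub>v k" if v: "v \<in> carrier_vec k" "v \<noteq> 0\<^sub>v k" for v
  proof
    assume "?G *\<^sub>v v = 0\<^sub>v k"
    moreover have "?G *\<^sub>v v = transpose_mat Y *\<^sub>v (Y *\<^sub>v v)" using Y v by auto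
    ultimately have "(transpose_mat Y *\<^sub>v (Y *\<^sub>v v)) \<bullet> v = 0" using v by simp
    then have "(Y *\<^sub>v v) \<bullet> (Y *\<^sub>v v) = 0"
      using transpose_vec_mult_scalar[OF Y v(1), of "Y *\<^sub>v v"] Y v by simp
    then have "Y *\<^sub>v v = 0\<^sub>v n"
      using scalar_prod_self_eq_zero[of "Y *\<^sub>v v" n] Y v by simp
    then show False using ker v by auto
  qed
  then have "det ?G \<noteq> 0" using det_0_iff_vec_prod_zero[OF G] by blast
  then show ?thesis by (rule det_non_zero_imp_unit[OF G])
qed

definition hat_mat :: "real mat \<Rightarrow> real mat" where
  "hat_mat Y = Y * the (mat_inverse (transpose_mat Y * Y)) * transpose_mat Y"

lemma projm_eq_hat_mat: "projm X k = hat_mat (firstcols X k)"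
  unfolding projm_def hat_mat_def Let_def ..

context
  fixes Y :: "real mat" and n k :: nat
  assumes Y: "Y \<in> carrier_mat n k"
    and ker: "\<forall>v\<in>carrier_vec k. Y *\<^sub>v v = 0\<^sub>v n \<longrightarrow> v = 0\<^sub>v k"
begin

lemma gram_mat_inverse:
  defines "B \<equiv> the (mat_inverse (transpose_mat Y * Y))"
  shows "B \<in> carrier_mat k k" "(transpose_mat Y * Y) * B = 1\<^sub>m k" "B * (transpose_mat Y * Y) = 1\<^sub>m k"
    "transpose_mat B = B"
proof -
  let ?G = "transpose_mat Y * Y"
  have G: "?G \<in> carrier_mat k k" using Y by auto
  obtain B' where "mat_inverse ?G = Some B'"
    using mat_inverse(1)[OF G, of k] gram_mat_invertible[OF Y ker] by (cases "mat_inverse ?G") auto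
  then have "mat_inverse ?G = Some B" unfolding B_def by simp
  note inv = mat_inverse(2)[OF G this]
  then show B: "B \<in> carrier_mat k k" "?G * B = 1\<^sub>m k" "B * ?G = 1\<^sub>m k" by auto
  have Bt: "transpose_mat B \<in> carrier_mat k k" using B by simp
  have "transpose_mat B * ?G = transpose_mat (?G * B)"
    using transpose_mult[OF G B(1)] transpose_mult[of "transpose_mat Y" k n Y k] Y by simp
  then have BtG: "transpose_mat B * ?G = 1\<^sub>m k" using B by simp
  have "transpose_mat B = transpose_mat B * (?G * B)" using B Bt by simp
  also have "\<dots> = (transpose_mat B * ?G) * B" using Bt G B by (simp add: assoc_mult_mat)
  also have "\<dots> = B" using BtG B by simp
  finally show "transpose_mat B = B" .
qed

lemma hat_mat_carrier: "hat_mat Y \<in> carrier_mat n n"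
  using Y gram_mat_inverse(1) by (simp add: hat_mat_def)

lemma hat_mat_symmetric: "transpose_mat (hat_mat Y) = hat_mat Y"
proof -
  let ?B = "the (mat_inverse (transpose_mat Y * Y))"
  have B: "?B \<in> carrier_mat k k" "transpose_mat ?B = ?B" using gram_mat_inverse by auto
  have YB: "Y * ?B \<in> carrier_mat n k" using Y B by simp
  have "transpose_mat (Y * ?B * transpose_mat Y) = Y * transpose_mat (Y * ?B)"
    using transpose_mult[OF YB, of "transpose_mat Y" n] Y by simp
  also have "\<dots> = Y * (?B * transpose_mat Y)"
    using transpose_mult[OF Y B(1)] B by simp
  also have "\<dots> = Y * ?B * transpose_mat Y"
    using Y B by (simp add: assoc_mult_mat[of Y n k ?B k "transpose_mat Y" n])
  finally show ?thesis unfolding hat_mat_def .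
qed

lemma hat_mat_mult_self: "hat_mat Y * Y = Y"
proof -
  let ?B = "the (mat_inverse (transpose_mat Y * Y))"
  have B: "?B \<in> carrier_mat k k" "?B * (transpose_mat Y * Y) = 1\<^sub>m k" using gram_mat_inverse by auto
  have YT: "transpose_mat Y \<in> carrier_mat k n" using Y by simp
  have "hat_mat Y * Y = Y * ?B * (transpose_mat Y * Y)"
    unfolding hat_mat_def by (rule assoc_mult_mat[OF mult_carrier_mat[OF Y B(1)] YT Y])
  also have "\<dots> = Y * (?B * (transpose_mat Y * Y))"
    by (rule assoc_mult_mat[OF Y B(1) mult_carrier_mat[OF YT Y]])
  finally show ?thesis using B Y by simp
qed

lemma hat_mat_mult_of_fixed:
  assumes P: "P \<in> carrier_mat n n" and PY: "P * Y = Y"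
  shows "P * hat_mat Y = hat_mat Y"
proof -
  let ?B = "the (mat_inverse (transpose_mat Y * Y))"
  have B: "?B \<in> carrier_mat k k" using gram_mat_inverse by auto
  have "P * hat_mat Y = P * (Y * ?B) * transpose_mat Y"
    unfolding hat_mat_def using P Y B
    by (simp add: assoc_mult_mat[of P n n "Y * ?B" k "transpose_mat Y" n])
  also have "P * (Y * ?B) = P * Y * ?B"
    using P Y B by (simp add: assoc_mult_mat[of P n n Y k ?B k])
  finally show ?thesis using PY by (simp add: hat_mat_def)
qed

lemma hat_mat_trace: "trace_mat (hat_mat Y) = real k"
proof -
  let ?B = "the (mat_inverse (transpose_mat Y * Y))"
  have B: "?B \<in> carrier_mat k k" "(transpose_mat Y * Y) * ?B = 1\<^sub>m k" using gram_mat_inverse by auto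
  have "trace_mat (hat_mat Y) = trace_mat (transpose_mat Y * (Y * ?B))"
    unfolding hat_mat_def by (rule trace_mat_mult_comm[of _ n k]) (use Y B in auto)
  also have "transpose_mat Y * (Y * ?B) = (transpose_mat Y * Y) * ?B"
    using Y B by (intro assoc_mult_mat[symmetric]) auto
  also have "\<dots> = 1\<^sub>m k" by (rule B(2))
  finally show ?thesis by (simp add: trace_mat_def)
qed

end

definition selection_mat :: "nat \<Rightarrow> nat \<Rightarrow> real mat" where
  "selection_mat k j = mat k j (\<lambda>(i, l). if i = l then 1 else 0)"

lemma firstcols_eq_mult_selection_mat:
  assumes "j \<le> k"
  shows "firstcols X j = firstcols X k * selection_mat k j"
proof (rule eq_matI)
  fix r l
  assume "r < dim_row (firstcols X k * selection_mat k j)" "l < dim_col (firstcols X k * selection_mat k j)"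
  then have r: "r < dim_row X" and l: "l < j" by (auto simp: firstcols_def selection_mat_def)
  have "(firstcols X k * selection_mat k j) $$ (r, l)
      = (\<Sum>i<k. firstcols X k $$ (r, i) * selection_mat k j $$ (i, l))"
    by (rule index_mult_mat_sum[of _ "dim_row X" k _ j]) (use r l in \<open>auto simp: firstcols_def selection_mat_def\<close>)
  also have "\<dots> = (\<Sum>i<k. if i = l then X $$ (r, l) else 0)"
    using r l assms by (intro sum.cong) (auto simp: firstcols_def selection_mat_def)
  finally show "firstcols X j $$ (r, l) = (firstcols X k * selection_mat k j) $$ (r, l)"
    using r l assms by (simp add: firstcols_def)
qed (auto simp: firstcols_def selection_mat_def)

lemma firstcols_carrier: "firstcols X j \<in> carrier_mat (dim_row X) j"
  by (simp add: firstcols_def)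

section \<open>Second moments\<close>

lemma integrable_mult_of_square_integrable:
  fixes f g :: "'a \<Rightarrow> real"
  assumes "f \<in> borel_measurable M" "g \<in> borel_measurable M"
    and "integrable M (\<lambda>x. (f x)\<^sup>2)" "integrable M (\<lambda>x. (g x)\<^sup>2)"
  shows "integrable M (\<lambda>x. f x * g x)"
proof (rule Bochner_Integration.integrable_bound[where f = "\<lambda>x. (f x)\<^sup>2 + (g x)\<^sup>2"])
  have "\<bar>f x * g x\<bar> \<le> (f x)\<^sup>2 + (g x)\<^sup>2" for x
  proof -
    have "2 * \<bar>f x\<bar> * \<bar>g x\<bar> \<le> \<bar>f x\<bar>\<^sup>2 + \<bar>g x\<bar>\<^sup>2" by (rule sum_squares_bound)
    moreover have "0 \<le> \<bar>f x\<bar> * \<bar>g x\<bar>" by simp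
    moreover have "\<bar>f x * g x\<bar> = \<bar>f x\<bar> * \<bar>g x\<bar>" by (rule abs_mult)
    ultimately show ?thesis by simp
  qed
  then show "AE x in M. norm (f x * g x) \<le> norm ((f x)\<^sup>2 + (g x)\<^sup>2)" by simp
qed (use assms in auto)

lemma expectation_sum_square_affine:
  fixes eps :: "'a \<Rightarrow> real vec" and u :: "nat \<Rightarrow> real" and A :: "nat \<Rightarrow> nat \<Rightarrow> real"
  assumes "prob_space Pr"
    and eps: "\<forall>i<n. (\<lambda>\<omega>. eps \<omega> $ i) \<in> borel_measurable Pr \<and>
             integrable Pr (\<lambda>\<omega>. (eps \<omega> $ i)\<^sup>2) \<and> integral\<^sup>L Pr (\<lambda>\<omega>. eps \<omega> $ i) = 0"
    and cov: "\<forall>i<n. \<forall>j<n. integral\<^sup>L Pr (\<lambda>\<omega>. eps \<omega> $ i * eps \<omega> $ j) = \<Omega> $$ (i, j)"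
  shows "integral\<^sup>L Pr (\<lambda>\<omega>. \<Sum>i<n. (u i + (\<Sum>k<n. A i k * eps \<omega> $ k))\<^sup>2)
       = (\<Sum>i<n. (u i)\<^sup>2) + (\<Sum>i<n. \<Sum>k<n. \<Sum>l<n. A i k * A i l * \<Omega> $$ (k, l))"
proof -
  interpret prob_space Pr by fact
  have int1: "integrable Pr (\<lambda>\<omega>. eps \<omega> $ k)" if "k < n" for k
    using eps that square_integrable_imp_integrable by blast
  have int2: "integrable Pr (\<lambda>\<omega>. eps \<omega> $ k * eps \<omega> $ l)" if "k < n" "l < n" for k l
    using eps that by (intro integrable_mult_of_square_integrable) auto
  have expand: "(\<Sum>i<n. (u i + (\<Sum>k<n. A i k * eps \<omega> $ k))\<^sup>2) =
     (\<Sum>i<n. (u i)\<^sup>2) + (\<Sum>i<n. \<Sum>k<n. (2 * u i * A i k) * eps \<omega> $ k)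
     + (\<Sum>i<n. \<Sum>k<n. \<Sum>l<n. (A i k * A i l) * (eps \<omega> $ k * eps \<omega> $ l))" for \<omega>
    by (simp add: power2_eq_square algebra_simps sum_distrib_left sum_distrib_right sum_product
        sum.distrib)
  have int1s: "integrable Pr (\<lambda>\<omega>. \<Sum>k<n. c k * eps \<omega> $ k)" for c
    using int1 by (auto intro!: Bochner_Integration.integrable_sum)
  have int2s: "integrable Pr (\<lambda>\<omega>. \<Sum>l<n. c l * (eps \<omega> $ k * eps \<omega> $ l))" if "k < n" for c k
    using int2 that by (auto intro!: Bochner_Integration.integrable_sum)
  have int2ss: "integrable Pr (\<lambda>\<omega>. \<Sum>k<n. \<Sum>l<n. c k l * (eps \<omega> $ k * eps \<omega> $ l))" for c
    using int2 by (auto intro!: Bochner_Integration.integrable_sum Bochner_Integration.integrable_mult_right)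
  have lin: "integral\<^sup>L Pr (\<lambda>\<omega>. \<Sum>i<n. \<Sum>k<n. (2 * u i * A i k) * eps \<omega> $ k) = 0"
    using eps by (simp add: Bochner_Integration.integral_sum int1 int1s)
  have quad: "integral\<^sup>L Pr (\<lambda>\<omega>. \<Sum>i<n. \<Sum>k<n. \<Sum>l<n. (A i k * A i l) * (eps \<omega> $ k * eps \<omega> $ l))
      = (\<Sum>i<n. \<Sum>k<n. \<Sum>l<n. A i k * A i l * \<Omega> $$ (k, l))"
    using cov by (simp add: Bochner_Integration.integral_sum int2 int2s int2ss)
  have "integrable Pr (\<lambda>\<omega>. \<Sum>i<n. \<Sum>k<n. (2 * u i * A i k) * eps \<omega> $ k)"
    "integrable Pr (\<lambda>\<omega>. \<Sum>i<n. \<Sum>k<n. \<Sum>l<n. (A i k * A i l) * (eps \<omega> $ k * eps \<omega> $ l))"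
    using int1s int2ss by (auto intro!: Bochner_Integration.integrable_sum)
  then show ?thesis
    unfolding expand using lin quad by (simp add: prob_space)
qed

section \<open>Finite sums\<close>

lemma sum_increments_telescope:
  fixes f :: "nat \<Rightarrow> real"
  assumes "f 0 = 0"
  shows "(\<Sum>m\<in>{1..k}. f m - f (m - 1)) = f k"
  using assms by (induction k) (auto simp: sum.atLeast_Suc_atMost_Suc_shift)

definition tail_sum :: "(nat \<Rightarrow> real) \<Rightarrow> nat \<Rightarrow> nat \<Rightarrow> real" where
  "tail_sum w M m = (\<Sum>j\<in>{m..M}. w j)"

lemma sum_increments_indicator:
  fixes f :: "nat \<Rightarrow> real"
  assumes "f 0 = 0" "k \<le> M"
  shows "(\<Sum>m\<in>{1..M}. if m \<le> k then f m - f (m - 1) else 0) = f k"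
proof -
  have "(\<Sum>m\<in>{1..M}. if m \<le> k then f m - f (m - 1) else 0) = (\<Sum>m\<in>{1..k}. f m - f (m - 1))"
    using assms(2) by (simp add: sum.If_cases Int_def) (intro sum.cong; auto)
  then show ?thesis using sum_increments_telescope[where f = f, OF assms(1)] by simp
qed

lemma tail_sum_eq_indicator_sum:
  "1 \<le> m \<Longrightarrow> tail_sum w M m = (\<Sum>j\<in>{1..M}. if m \<le> j then w j else 0)"
  unfolding tail_sum_def by (simp add: sum.If_cases Int_def) (intro sum.cong; auto)

lemma sum_swap3:
  "(\<Sum>i\<in>I. \<Sum>j\<in>J. \<Sum>k\<in>K. f i j k) = (\<Sum>j\<in>J. \<Sum>k\<in>K. \<Sum>i\<in>I. f i j k)"
  by (subst sum.swap) (simp add: sum.swap[of _ I])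

lemma sum_increments_indicator_mult:
  fixes f :: "nat \<Rightarrow> real"
  assumes "f 0 = 0" "j \<le> M"
  shows "c * f j = (\<Sum>m\<in>{1..M}. (f m - f (m - 1)) * (if m \<le> j then c else 0))"
proof -
  have "c * f j = (\<Sum>m\<in>{1..M}. c * (if m \<le> j then f m - f (m - 1) else 0))"
    by (simp add: sum_increments_indicator[where f = f, OF assms, symmetric] sum_distrib_left[symmetric])
  also have "\<dots> = (\<Sum>m\<in>{1..M}. (f m - f (m - 1)) * (if m \<le> j then c else 0))"
    by (intro sum.cong refl) simp
  finally show ?thesis .
qed

lemma sum_mult_eq_sum_increments_tail_sum:
  fixes f w :: "nat \<Rightarrow> real"
  assumes "f 0 = 0"
  shows "(\<Sum>j\<in>{1..M}. w j * f j) = (\<Sum>m\<in>{1..M}. (f m - f (m - 1)) * tail_sum w M m)"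
proof -
  have "(\<Sum>j\<in>{1..M}. w j * f j)
      = (\<Sum>j\<in>{1..M}. \<Sum>m\<in>{1..M}. (f m - f (m - 1)) * (if m \<le> j then w j else 0))"
    by (intro sum.cong refl sum_increments_indicator_mult[where f = f, OF assms]) auto
  also have "\<dots> = (\<Sum>m\<in>{1..M}. (f m - f (m - 1)) * tail_sum w M m)"
    by (subst sum.swap) (simp add: sum_distrib_left[symmetric] tail_sum_eq_indicator_sum)
  finally show ?thesis .
qed

lemma double_sum_min_eq_sum_increments_tail_sum:
  fixes f w :: "nat \<Rightarrow> real"
  assumes "f 0 = 0"
  shows "(\<Sum>j\<in>{1..M}. \<Sum>j'\<in>{1..M}. w j * w j' * f (min j j'))
       = (\<Sum>m\<in>{1..M}. (f m - f (m - 1)) * (tail_sum w M m)\<^sup>2)"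
proof -
  let ?d = "\<lambda>m. f m - f (m - 1)" and ?v = "\<lambda>m j. if m \<le> j then w j else 0"
  have "(\<Sum>j\<in>{1..M}. \<Sum>j'\<in>{1..M}. w j * w j' * f (min j j'))
      = (\<Sum>j\<in>{1..M}. \<Sum>j'\<in>{1..M}. \<Sum>m\<in>{1..M}. ?d m * (?v m j * ?v m j'))"
  proof (intro sum.cong refl)
    fix j j' assume "j \<in> {1..M}" "j' \<in> {1..M}"
    then have "w j * w j' * f (min j j') = (\<Sum>m\<in>{1..M}. ?d m * (if m \<le> min j j' then w j * w j' else 0))"
      by (intro sum_increments_indicator_mult[where f = f, OF assms]) auto
    then show "w j * w j' * f (min j j') = (\<Sum>m\<in>{1..M}. ?d m * (?v m j * ?v m j'))"
      by (auto intro!: sum.cong)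
  qed
  also have "\<dots> = (\<Sum>m\<in>{1..M}. \<Sum>j\<in>{1..M}. \<Sum>j'\<in>{1..M}. ?d m * (?v m j * ?v m j'))"
    by (rule sum_swap3[symmetric])
  also have "\<dots> = (\<Sum>m\<in>{1..M}. ?d m * ((\<Sum>j\<in>{1..M}. ?v m j) * (\<Sum>j'\<in>{1..M}. ?v m j')))"
    by (intro sum.cong refl, subst sum_product, simp add: sum_distrib_left)
  also have "\<dots> = (\<Sum>m\<in>{1..M}. ?d m * (tail_sum w M m)\<^sup>2)"
    by (intro sum.cong refl) (simp add: tail_sum_eq_indicator_sum power2_eq_square)
  finally show ?thesis .
qed

lemma sum_group_by_level:
  fixes g :: "'a \<Rightarrow> int"
  assumes S: "finite S" and g: "g ` S \<subseteq> {lo..hi}"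
  shows "(\<Sum>x\<in>S. h (g x) x)
       = (\<Sum>i\<in>{lo + 1..hi}. \<Sum>x\<in>{x \<in> S. g x = i}. h i x) + (\<Sum>x\<in>{x \<in> S. g x = lo}. h lo x)"
proof -
  have "(\<Sum>x\<in>S. h (g x) x) = (\<Sum>i\<in>{lo..hi}. \<Sum>x\<in>{x \<in> S. g x = i}. h (g x) x)"
    using S g by (intro sum.group[symmetric]) auto
  also have "\<dots> = (\<Sum>i\<in>{lo..hi}. \<Sum>x\<in>{x \<in> S. g x = i}. h i x)"
    by (intro sum.cong) auto
  also have "\<dots> = (\<Sum>i\<in>{lo + 1..hi}. \<Sum>x\<in>{x \<in> S. g x = i}. h i x) + (\<Sum>x\<in>{x \<in> S. g x = lo}. h lo x)"
  proof (cases "lo \<le> hi")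
    case True
    then have "{lo..hi} = insert lo {lo + 1..hi}" by auto
    then show ?thesis by (simp add: add.commute)
  next
    case False
    then show ?thesis using g by auto
  qed
  finally show ?thesis .
qed

lemma triple_sum_weighted_products:
  fixes w :: "'i \<Rightarrow> real"
  shows "(\<Sum>i\<in>I. \<Sum>k\<in>K. \<Sum>l\<in>L. (\<Sum>j\<in>J. w j * F j i k) * (\<Sum>j'\<in>J. w j' * F j' i l) * W k l)
     = (\<Sum>j\<in>J. \<Sum>j'\<in>J. w j * w j' * (\<Sum>i\<in>I. \<Sum>k\<in>K. \<Sum>l\<in>L. F j i k * F j' i l * W k l))"
proof -
  have "(\<Sum>j\<in>J. w j * F j i k) * (\<Sum>j'\<in>J. w j' * F j' i l) * W k l
     = (\<Sum>j\<in>J. \<Sum>j'\<in>J. w j * w j' * (F j i k * F j' i l * W k l))" for i k l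
    by (subst sum_product) (simp add: sum_distrib_right sum_distrib_left mult_ac)
  then have "(\<Sum>i\<in>I. \<Sum>k\<in>K. \<Sum>l\<in>L. (\<Sum>j\<in>J. w j * F j i k) * (\<Sum>j'\<in>J. w j' * F j' i l) * W k l)
     = (\<Sum>i\<in>I. \<Sum>k\<in>K. \<Sum>l\<in>L. \<Sum>j\<in>J. \<Sum>j'\<in>J. w j * w j' * (F j i k * F j' i l * W k l))"
    by simp
  also have "\<dots> = (\<Sum>i\<in>I. \<Sum>k\<in>K. \<Sum>j\<in>J. \<Sum>j'\<in>J. \<Sum>l\<in>L. w j * w j' * (F j i k * F j' i l * W k l))"
    by (simp only: sum_swap3[where I = L and J = J and K = J])
  also have "\<dots> = (\<Sum>i\<in>I. \<Sum>j\<in>J. \<Sum>j'\<in>J. \<Sum>k\<in>K. \<Sum>l\<in>L. w j * w j' * (F j i k * F j' i l * W k l))"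
    by (simp only: sum_swap3[where I = K and J = J and K = J])
  also have "\<dots> = (\<Sum>j\<in>J. \<Sum>j'\<in>J. \<Sum>i\<in>I. \<Sum>k\<in>K. \<Sum>l\<in>L. w j * w j' * (F j i k * F j' i l * W k l))"
    by (rule sum_swap3)
  also have "\<dots> = (\<Sum>j\<in>J. \<Sum>j'\<in>J. w j * w j' * (\<Sum>i\<in>I. \<Sum>k\<in>K. \<Sum>l\<in>L. F j i k * F j' i l * W k l))"
    by (simp add: sum_distrib_left)
  finally show ?thesis .
qed

section \<open>Shrinking a single block\<close>

definition block_risk :: "real \<Rightarrow> real \<Rightarrow> real \<Rightarrow> real" where
  "block_risk a b t = t\<^sup>2 * b + (1 - t)\<^sup>2 * a"

lemma block_risk_complete_square:
  assumes s: "0 < a + b"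
  shows "block_risk a b t = (a + b) * (t - a / (a + b))\<^sup>2 + a * b / (a + b)"
proof -
  have "t - a / (a + b) = (t * (a + b) - a) / (a + b)"
    using s by (simp add: field_simps)
  moreover have "S * (y / S)\<^sup>2 + c / S = (y\<^sup>2 + c) / S" if "0 < S" for S y c :: real
    using that by (simp add: power2_eq_square field_simps)
  ultimately have "(a + b) * (t - a / (a + b))\<^sup>2 + a * b / (a + b) = ((t * (a + b) - a)\<^sup>2 + a * b) / (a + b)"
    using s by simp
  also have "(t * (a + b) - a)\<^sup>2 + a * b = (a + b) * block_risk a b t"
    unfolding block_risk_def by (simp add: power2_eq_square algebra_simps)
  finally show ?thesis using s by simp
qed

definition grid_round :: "nat \<Rightarrow> real \<Rightarrow> int" where
  "grid_round N x = \<lceil>real N * x - 1 / 2\<rceil>"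

lemma grid_round_mono: "x \<le> y \<Longrightarrow> grid_round N x \<le> grid_round N y"
  unfolding grid_round_def by (intro ceiling_mono) (simp add: mult_left_mono)

lemma grid_round_bounds:
  assumes "0 \<le> x" "x \<le> 1"
  shows "0 \<le> grid_round N x" "grid_round N x \<le> int N"
proof -
  have "0 \<le> real N * x" "real N * x \<le> real N"
    using assms by (simp_all add: mult_left_le)
  then show "0 \<le> grid_round N x" "grid_round N x \<le> int N"
    unfolding grid_round_def by (auto simp: ceiling_le_iff intro!: le_ceiling_iff[THEN iffD2])
qed

context
  fixes N :: nat
  assumes N: "0 < N"
begin

lemma grid_round_le_iff:
  "grid_round N x \<le> i \<longleftrightarrow> x \<le> (2 * real_of_int i + 1) / (2 * real N)"
proof -
  have "grid_round N x \<le> i \<longleftrightarrow> real N * x - 1 / 2 \<le> real_of_int i"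
    unfolding grid_round_def by (rule ceiling_le_iff)
  also have "\<dots> \<longleftrightarrow> x \<le> (2 * real_of_int i + 1) / (2 * real N)"
    using N by (simp add: field_simps)
  finally show ?thesis .
qed

lemma less_grid_round_iff:
  "i < grid_round N x \<longleftrightarrow> (2 * real_of_int i + 1) / (2 * real N) < x"
  using grid_round_le_iff[of x i] by linarith

lemma le_grid_round_iff:
  "i \<le> grid_round N x \<longleftrightarrow> (2 * real_of_int i - 1) / (2 * real N) < x"
proof -
  have "i \<le> grid_round N x \<longleftrightarrow> i - 1 < grid_round N x" by linarith
  also have "\<dots> \<longleftrightarrow> (2 * real_of_int (i - 1) + 1) / (2 * real N) < x"
    by (rule less_grid_round_iff)
  also have "2 * real_of_int (i - 1) + 1 = 2 * real_of_int i - 1" by simp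
  finally show ?thesis .
qed

lemma grid_round_eq_iff:
  "grid_round N x = i \<longleftrightarrow>
     (2 * real_of_int i - 1) / (2 * real N) < x \<and> x \<le> (2 * real_of_int i + 1) / (2 * real N)"
  using grid_round_le_iff[of x i] le_grid_round_iff[of i x] by auto

lemma grid_round_nearest:
  "(real_of_int (grid_round N x) / real N - x)\<^sup>2 \<le> (real_of_int k / real N - x)\<^sup>2"
proof -
  let ?y = "real N * x" and ?r = "real_of_int (grid_round N x)"
  have "?y - 1 / 2 \<le> ?r" "?r < ?y + 1 / 2"
    unfolding grid_round_def by linarith+
  moreover have "k = grid_round N x \<or> real_of_int k \<le> ?r - 1 \<or> ?r + 1 \<le> real_of_int k"
    by linarith
  ultimately have "\<bar>?r - ?y\<bar> \<le> \<bar>real_of_int k - ?y\<bar>"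
    by linarith
  then have "(?r - ?y)\<^sup>2 \<le> (real_of_int k - ?y)\<^sup>2"
    by (simp only: abs_le_square_iff)
  moreover have "z / real N - x = (z - ?y) / real N" for z
    using N by (simp add: field_simps)
  ultimately show ?thesis
    by (simp only: power_divide) (simp add: divide_right_mono)
qed

lemma sum_nearest_grid_indicator:
  assumes "0 \<le> x" "x \<le> 1"
  shows "(\<Sum>i\<in>{0..N}. (real i / real N - x)\<^sup>2 *
           (if (2 * real i - 1) / (2 * real N) < x \<and> x \<le> (2 * real i + 1) / (2 * real N) then 1 else 0))
       = (real_of_int (grid_round N x) / real N - x)\<^sup>2"
proof -
  let ?k = "nat (grid_round N x)"
  have bounds: "0 \<le> grid_round N x" "?k \<le> N"
    using grid_round_bounds[of x N, OF assms] by auto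
  have cond: "((2 * real i - 1) / (2 * real N) < x \<and> x \<le> (2 * real i + 1) / (2 * real N))
      \<longleftrightarrow> i = ?k" for i
    using grid_round_eq_iff[of x "int i"] bounds by auto
  have "(\<Sum>i\<in>{0..N}. (real i / real N - x)\<^sup>2 *
           (if (2 * real i - 1) / (2 * real N) < x \<and> x \<le> (2 * real i + 1) / (2 * real N) then 1 else 0))
      = (\<Sum>i\<in>{0..N}. if i = ?k then (real i / real N - x)\<^sup>2 else 0)"
    by (intro sum.cong refl) (simp only: cond, simp)
  also have "\<dots> = (real ?k / real N - x)\<^sup>2"
    using bounds(2) by simp
  finally show ?thesis
    using bounds(1) by simp
qed

end

section \<open>Weights and their tail sums\<close>

lemma tail_sum_first_weights: "w \<in> weights M \<Longrightarrow> tail_sum w M 1 = 1"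
  by (simp add: weights_def tail_sum_def)

lemma tail_sum_weights_grid:
  assumes "w \<in> weights_grid M N"
  obtains k :: int where "tail_sum w M m = real_of_int k / real N"
proof -
  have "\<forall>j\<in>{1..M}. \<exists>k\<in>{0..N}. w j = real k / real N"
    using assms by (simp add: weights_grid_def)
  then obtain c where c: "\<forall>j\<in>{1..M}. w j = real (c j) / real N"
    by metis
  have "\<forall>j. j \<notin> {1..M} \<longrightarrow> w j = 0"
    using assms by (simp add: weights_grid_def weights_def)
  then have "tail_sum w M m = (\<Sum>j\<in>{m..M}. real (if j \<in> {1..M} then c j else 0) / real N)"
    unfolding tail_sum_def using c by (intro sum.cong refl) auto
  also have "\<dots> = real_of_int (int (\<Sum>j\<in>{m..M}. if j \<in> {1..M} then c j else 0)) / real N"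
    by (simp add: sum_divide_distrib[symmetric])
  finally show ?thesis by (rule that)
qed

definition tail_extension :: "nat \<Rightarrow> (nat \<Rightarrow> real) \<Rightarrow> nat \<Rightarrow> real" where
  "tail_extension M g j = (if j \<le> 1 then 1 else if j \<le> M then g j else 0)"

definition weight_of_tails :: "nat \<Rightarrow> (nat \<Rightarrow> real) \<Rightarrow> nat \<Rightarrow> real" where
  "weight_of_tails M g m =
     (if m \<in> {1..M} then tail_extension M g m - tail_extension M g (Suc m) else 0)"

lemma tail_sum_weight_of_tails:
  assumes "m \<in> {1..M}"
  shows "tail_sum (weight_of_tails M g) M m = tail_extension M g m"
proof -
  have "tail_sum (weight_of_tails M g) M m
      = - (\<Sum>j\<in>{m..M}. tail_extension M g (Suc j) - tail_extension M g j)"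
    unfolding tail_sum_def weight_of_tails_def sum_negf[symmetric]
    using assms by (intro sum.cong refl) auto
  also have "\<dots> = tail_extension M g m"
    using sum_Suc_diff[of m M "tail_extension M g"] assms by (simp add: tail_extension_def)
  finally show ?thesis .
qed

context
  fixes M :: nat and g :: "nat \<Rightarrow> real"
  assumes M: "1 \<le> M"
    and g_range: "\<forall>m\<in>{2..M}. 0 \<le> g m \<and> g m \<le> 1"
    and g_antimono: "\<forall>m\<in>{2..<M}. g (Suc m) \<le> g m"
begin

lemma weight_of_tails_in_weights: "weight_of_tails M g \<in> weights M"
proof -
  have range: "0 \<le> tail_extension M g j \<and> tail_extension M g j \<le> 1" for j
    using g_range by (auto simp: tail_extension_def)
  have "tail_extension M g (Suc m) \<le> tail_extension M g m" if "m \<in> {1..M}" for m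
    using that g_range g_antimono by (cases "m = 1") (auto simp: tail_extension_def)
  then have "0 \<le> weight_of_tails M g m \<and> weight_of_tails M g m \<le> 1" if "m \<in> {1..M}" for m
    using that range[of m] range[of "Suc m"] by (auto simp: weight_of_tails_def)
  moreover have "(\<Sum>m\<in>{1..M}. weight_of_tails M g m) = 1"
    using tail_sum_weight_of_tails[of 1 M g] M by (simp add: tail_sum_def tail_extension_def)
  ultimately show ?thesis
    unfolding weights_def by (auto simp: weight_of_tails_def)
qed

lemma weight_of_tails_in_weights_grid:
  assumes N: "0 < N" and grid: "\<forall>m\<in>{2..M}. \<exists>k::int. g m = real_of_int k / real N"
  shows "weight_of_tails M g \<in> weights_grid M N"
proof -
  have ext: "\<exists>k::int. tail_extension M g j = real_of_int k / real N" for j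
    using grid N by (auto simp: tail_extension_def intro: exI[of _ 0] exI[of _ "int N"])
  have int: "\<exists>k::int. weight_of_tails M g m = real_of_int k / real N" for m
  proof (cases "m \<in> {1..M}")
    case True
    obtain k1 k2 :: int where "tail_extension M g m = real_of_int k1 / real N"
      "tail_extension M g (Suc m) = real_of_int k2 / real N"
      using ext by meson
    then have "weight_of_tails M g m = real_of_int (k1 - k2) / real N"
      using True by (simp add: weight_of_tails_def diff_divide_distrib)
    then show ?thesis by blast
  qed (auto simp: weight_of_tails_def intro: exI[of _ 0])
  have "\<exists>j\<in>{0..N}. weight_of_tails M g m = real j / real N" if m: "m \<in> {1..M}" for m
  proof -
    obtain k :: int where k: "weight_of_tails M g m = real_of_int k / real N"
      using int by blast
    have "0 \<le> weight_of_tails M g m \<and> weight_of_tails M g m \<le> 1"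
      using weight_of_tails_in_weights m unfolding weights_def by blast
    then have "0 \<le> real_of_int k / real N" "real_of_int k / real N \<le> 1"
      unfolding k by auto
    then have "0 \<le> real_of_int k" "real_of_int k \<le> real_of_int (int N)"
      using N by (simp_all add: zero_le_divide_iff divide_le_eq_1_pos)
    then have "0 \<le> k" "k \<le> int N"
      by (simp_all only: of_int_le_iff of_int_0_le_iff)
    then show ?thesis
      using k by (intro bexI[of _ "nat k"]) auto
  qed
  then show ?thesis
    using weight_of_tails_in_weights unfolding weights_grid_def by blast
qed

end

section \<open>Risk of averaged nested least squares\<close>

locale nested_regression =
  fixes X :: "real mat" and n p q M :: nat and \<nu> :: "nat \<Rightarrow> nat" and \<beta> :: "real vec"
    and \<Omega> :: "real mat" and Pr :: "'a measure" and eps :: "'a \<Rightarrow> real vec"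
  assumes X_carrier: "X \<in> carrier_mat n p" and p_less_n: "p < n"
    and nu_0: "\<nu> 0 = 0" and nu_strict_mono: "\<forall>m<q. \<nu> m < \<nu> (Suc m)"
    and design_full_rank: "\<forall>m\<in>{1..q}. \<forall>v\<in>carrier_vec (\<nu> m).
          firstcols X (\<nu> m) *\<^sub>v v = 0\<^sub>v n \<longrightarrow> v = 0\<^sub>v (\<nu> m)"
    and M_ge_2: "2 \<le> M" and M_le_q: "M \<le> q"
    and beta_carrier: "\<beta> \<in> carrier_vec p"
    and Omega_carrier: "\<Omega> \<in> carrier_mat n n" and Omega_pos_def: "pos_def_mat \<Omega>"
    and prob: "prob_space Pr" and eps_carrier: "\<forall>\<omega>\<in>space Pr. eps \<omega> \<in> carrier_vec n"
    and eps_moments: "\<forall>i<n. (\<lambda>\<omega>. eps \<omega> $ i) \<in> borel_measurable Pr \<and>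
             integrable Pr (\<lambda>\<omega>. (eps \<omega> $ i)\<^sup>2) \<and> integral\<^sup>L Pr (\<lambda>\<omega>. eps \<omega> $ i) = 0"
    and eps_cov: "\<forall>i<n. \<forall>j<n. integral\<^sup>L Pr (\<lambda>\<omega>. eps \<omega> $ i * eps \<omega> $ j) = \<Omega> $$ (i, j)"
begin

abbreviation P :: "nat \<Rightarrow> real mat" where "P k \<equiv> Pm X \<nu> k"
abbreviation a :: "nat \<Rightarrow> real" where "a m \<equiv> a_coef X \<nu> \<beta> m"
abbreviation b :: "nat \<Rightarrow> real" where "b m \<equiv> b_coef X \<nu> \<Omega> m"
abbreviation R :: "(nat \<Rightarrow> real) \<Rightarrow> real" where "R \<equiv> risk_weight Pr eps X \<nu> \<beta> M"

definition mu :: "real vec" where "mu = X *\<^sub>v \<beta>"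

lemma dim_row_X [simp]: "dim_row X = n"
  using X_carrier by simp

lemma mu_carrier: "mu \<in> carrier_vec n"
  using X_carrier beta_carrier by (simp add: mu_def)

lemma nu_mono: "j \<le> k \<Longrightarrow> k \<le> q \<Longrightarrow> \<nu> j \<le> \<nu> k"
proof (induction k)
  case (Suc k)
  show ?case
  proof (cases "j = Suc k")
    case False
    then have "\<nu> j \<le> \<nu> k" using Suc by auto
    moreover have "\<nu> k < \<nu> (Suc k)" using nu_strict_mono Suc.prems by auto
    ultimately show ?thesis by simp
  qed simp
qed simp

lemma nu_less: "j < k \<Longrightarrow> k \<le> q \<Longrightarrow> \<nu> j < \<nu> k"
  using nu_mono[of "Suc j" k] nu_strict_mono by (metis Suc_leI less_le_trans)

lemma P_eq_hat_mat: "1 \<le> k \<Longrightarrow> P k = hat_mat (firstcols X (\<nu> k))"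
  by (simp add: Pm_def projm_eq_hat_mat)

lemma firstcols_full_rank:
  "1 \<le> k \<Longrightarrow> k \<le> q \<Longrightarrow>
    \<forall>v\<in>carrier_vec (\<nu> k). firstcols X (\<nu> k) *\<^sub>v v = 0\<^sub>v n \<longrightarrow> v = 0\<^sub>v (\<nu> k)"
  using design_full_rank by auto

lemma P_carrier: "k \<le> q \<Longrightarrow> P k \<in> carrier_mat n n"
  using hat_mat_carrier[OF _ firstcols_full_rank] firstcols_carrier[of X]
  by (cases "k = 0") (simp add: Pm_def, simp add: P_eq_hat_mat)

lemma P_symmetric: "k \<le> q \<Longrightarrow> transpose_mat (P k) = P k"
  using hat_mat_symmetric[OF _ firstcols_full_rank] firstcols_carrier[of X]
  by (cases "k = 0") (simp add: Pm_def, simp add: P_eq_hat_mat)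

lemma P_trace: "k \<le> q \<Longrightarrow> trace_mat (P k) = real (\<nu> k)"
  using hat_mat_trace[OF _ firstcols_full_rank] firstcols_carrier[of X] nu_0
  by (cases "k = 0") (simp add: Pm_def trace_mat_def, simp add: P_eq_hat_mat)

lemma P_mult_nested:
  assumes "j \<le> k" "k \<le> q"
  shows "P k * P j = P j"
proof (cases "j = 0")
  case True
  then show ?thesis using P_carrier[OF assms(2)] by (simp add: Pm_def)
next
  case False
  let ?Yj = "firstcols X (\<nu> j)" and ?Yk = "firstcols X (\<nu> k)"
  have Yk: "?Yk \<in> carrier_mat n (\<nu> k)" using firstcols_carrier[of X] by simp
  have S: "selection_mat (\<nu> k) (\<nu> j) \<in> carrier_mat (\<nu> k) (\<nu> j)" by (simp add: selection_mat_def)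
  have Pk: "P k \<in> carrier_mat n n" using P_carrier assms by simp
  have "P k * ?Yj = P k * ?Yk * selection_mat (\<nu> k) (\<nu> j)"
    unfolding firstcols_eq_mult_selection_mat[OF nu_mono[OF assms]]
    by (rule assoc_mult_mat[OF Pk Yk S, symmetric])
  also have "P k * ?Yk = ?Yk"
    using hat_mat_mult_self[OF Yk firstcols_full_rank] False assms by (simp add: P_eq_hat_mat)
  finally have "P k * ?Yj = ?Yj"
    unfolding firstcols_eq_mult_selection_mat[OF nu_mono[OF assms]] .
  then show ?thesis
    using hat_mat_mult_of_fixed[OF _ firstcols_full_rank Pk] firstcols_carrier[of X] False assms
    by (simp add: P_eq_hat_mat)
qed

lemma P_mult: "j \<le> q \<Longrightarrow> k \<le> q \<Longrightarrow> P j * P k = P (min j k)"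
proof (cases "j \<le> k")
  case True
  assume jk: "j \<le> q" "k \<le> q"
  have "P j * P k = transpose_mat (P k * P j)"
    using transpose_mult[OF P_carrier[OF jk(2)] P_carrier[OF jk(1)]] P_symmetric jk by simp
  then show ?thesis using P_mult_nested[OF True jk(2)] P_symmetric jk True by simp
next
  case False
  then show "j \<le> q \<Longrightarrow> k \<le> q \<Longrightarrow> P j * P k = P (min j k)"
    using P_mult_nested[of k j] by simp
qed

lemma P_entry_symmetric: "k \<le> q \<Longrightarrow> i < n \<Longrightarrow> l < n \<Longrightarrow> P k $$ (i, l) = P k $$ (l, i)"
  using P_symmetric[of k] P_carrier[of k] by (metis carrier_matD index_transpose_mat(1))

lemma sum_P_entries_mult:
  assumes "j \<le> q" "k \<le> q" "i < n" "l < n"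
  shows "(\<Sum>r<n. P j $$ (r, i) * P k $$ (r, l)) = P (min j k) $$ (i, l)"
proof -
  have "(\<Sum>r<n. P j $$ (r, i) * P k $$ (r, l)) = (\<Sum>r<n. P j $$ (i, r) * P k $$ (r, l))"
    using assms by (intro sum.cong refl) (simp add: P_entry_symmetric)
  also have "\<dots> = (P j * P k) $$ (i, l)"
    by (rule index_mult_mat_sum[OF P_carrier[OF assms(1)] P_carrier[OF assms(2)] assms(3,4), symmetric])
  finally show ?thesis using P_mult[OF assms(1,2)] by simp
qed

definition proj_form :: "(nat \<Rightarrow> nat \<Rightarrow> real) \<Rightarrow> nat \<Rightarrow> real" where
  "proj_form W k = (\<Sum>i<n. \<Sum>l<n. P k $$ (i, l) * W i l)"

lemma proj_form_0: "proj_form W 0 = 0"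
  by (simp add: proj_form_def Pm_def)

lemma sum_rows_proj_form:
  assumes "j \<le> q" "k \<le> q"
  shows "(\<Sum>r<n. \<Sum>i<n. \<Sum>l<n. P j $$ (r, i) * P k $$ (r, l) * W i l) = proj_form W (min j k)"
proof -
  have "(\<Sum>r<n. \<Sum>i<n. \<Sum>l<n. P j $$ (r, i) * P k $$ (r, l) * W i l)
      = (\<Sum>i<n. \<Sum>l<n. \<Sum>r<n. P j $$ (r, i) * P k $$ (r, l) * W i l)"
    by (rule sum_swap3)
  also have "\<dots> = (\<Sum>i<n. \<Sum>l<n. (\<Sum>r<n. P j $$ (r, i) * P k $$ (r, l)) * W i l)"
    by (simp add: sum_distrib_right)
  also have "\<dots> = proj_form W (min j k)"
    unfolding proj_form_def using assms by (intro sum.cong refl) (simp add: sum_P_entries_mult)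
  finally show ?thesis .
qed

abbreviation mu_form :: "nat \<Rightarrow> real" where
  "mu_form \<equiv> proj_form (\<lambda>i l. mu $ i * mu $ l)"

abbreviation Omega_form :: "nat \<Rightarrow> real" where
  "Omega_form \<equiv> proj_form (\<lambda>i l. \<Omega> $$ (i, l))"

lemma scalar_prod_P_mu: "k \<le> q \<Longrightarrow> mu \<bullet> (P k *\<^sub>v mu) = mu_form k"
  unfolding proj_form_def
  by (subst scalar_prod_mult_mat_vec_sum[OF P_carrier mu_carrier mu_carrier], assumption)
    (simp add: sum_distrib_left mult_ac)

lemma Omega_symmetric: "i < n \<Longrightarrow> l < n \<Longrightarrow> \<Omega> $$ (i, l) = \<Omega> $$ (l, i)"
  using Omega_pos_def Omega_carrier unfolding pos_def_mat_def
  by (metis carrier_matD index_transpose_mat(1))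

lemma Omega_quadratic_pos: "v \<in> carrier_vec n \<Longrightarrow> v \<noteq> 0\<^sub>v n \<Longrightarrow> 0 < v \<bullet> (\<Omega> *\<^sub>v v)"
  using Omega_pos_def Omega_carrier by (auto simp: pos_def_mat_def)

lemma Omega_quadratic_nonneg: "v \<in> carrier_vec n \<Longrightarrow> 0 \<le> v \<bullet> (\<Omega> *\<^sub>v v)"
  using Omega_quadratic_pos[of v] Omega_carrier by (cases "v = 0\<^sub>v n") auto

lemma trace_P_Omega: "k \<le> q \<Longrightarrow> trace_mat (P k * \<Omega>) = Omega_form k"
proof -
  assume k: "k \<le> q"
  have "trace_mat (P k * \<Omega>) = (\<Sum>i<n. (P k * \<Omega>) $$ (i, i))"
    using P_carrier[OF k] Omega_carrier by (simp add: trace_mat_carrier[of _ n])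
  also have "\<dots> = (\<Sum>i<n. \<Sum>l<n. P k $$ (i, l) * \<Omega> $$ (l, i))"
    by (intro sum.cong refl) (rule index_mult_mat_sum[OF P_carrier[OF k] Omega_carrier], auto)
  finally show ?thesis
    unfolding proj_form_def by (simp add: Omega_symmetric)
qed

lemma a_coef_eq: "1 \<le> m \<Longrightarrow> m \<le> q \<Longrightarrow> a m = mu_form m - mu_form (m - 1)"
proof -
  assume m: "1 \<le> m" "m \<le> q"
  have c: "P m \<in> carrier_mat n n" "P (m - 1) \<in> carrier_mat n n" using P_carrier m by auto
  show ?thesis
    unfolding a_coef_def Let_def mu_def[symmetric]
    using minus_mult_distrib_mat_vec[OF c mu_carrier] scalar_prod_minus_distrib[OF mu_carrier]
      c mu_carrier scalar_prod_P_mu m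
    by simp
qed

lemma b_coef_eq: "1 \<le> m \<Longrightarrow> m \<le> q \<Longrightarrow> b m = Omega_form m - Omega_form (m - 1)"
proof -
  assume m: "1 \<le> m" "m \<le> q"
  have c: "P m \<in> carrier_mat n n" "P (m - 1) \<in> carrier_mat n n" using P_carrier m by auto
  show ?thesis
    unfolding b_coef_def
    using minus_mult_distrib_mat[OF c Omega_carrier] trace_mat_minus[of "P m * \<Omega>" n "P (m - 1) * \<Omega>"]
      c Omega_carrier trace_P_Omega m
    by simp
qed

lemma proj_form_increment:
  assumes "1 \<le> m" "m \<le> q"
  defines "D \<equiv> \<lambda>r i. P m $$ (r, i) - P (m - 1) $$ (r, i)"
  shows "proj_form W m - proj_form W (m - 1) = (\<Sum>r<n. \<Sum>i<n. \<Sum>l<n. D r i * D r l * W i l)"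
proof -
  have m1: "m - 1 \<le> q" using assms by simp
  have "D r i * D r l * W i l
     = P m $$ (r, i) * P m $$ (r, l) * W i l - P m $$ (r, i) * P (m - 1) $$ (r, l) * W i l
       - P (m - 1) $$ (r, i) * P m $$ (r, l) * W i l + P (m - 1) $$ (r, i) * P (m - 1) $$ (r, l) * W i l"
    for r i l
    unfolding D_def by (simp add: algebra_simps)
  then show ?thesis
    using sum_rows_proj_form[OF assms(2) assms(2)] sum_rows_proj_form[OF assms(2) m1]
      sum_rows_proj_form[OF m1 assms(2)] sum_rows_proj_form[OF m1 m1]
    by (simp add: sum.distrib sum_subtractf)
qed

lemma a_nonneg: "1 \<le> m \<Longrightarrow> m \<le> q \<Longrightarrow> 0 \<le> a m"
proof -
  assume m: "1 \<le> m" "m \<le> q"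
  let ?D = "\<lambda>r i. P m $$ (r, i) - P (m - 1) $$ (r, i)"
  have "a m = (\<Sum>r<n. \<Sum>i<n. \<Sum>l<n. ?D r i * ?D r l * (mu $ i * mu $ l))"
    using a_coef_eq[OF m] proj_form_increment[OF m] by simp
  also have "\<dots> = (\<Sum>r<n. (\<Sum>i<n. ?D r i * mu $ i)\<^sup>2)"
    by (simp add: power2_eq_square sum_product mult_ac)
  finally show ?thesis by (simp add: sum_nonneg)
qed

lemma b_pos: "1 \<le> m \<Longrightarrow> m \<le> q \<Longrightarrow> 0 < b m"
proof -
  assume m: "1 \<le> m" "m \<le> q"
  have m1: "m - 1 \<le> q" using m by simp
  let ?D = "\<lambda>r i. P m $$ (r, i) - P (m - 1) $$ (r, i)"
  let ?v = "\<lambda>r. vec n (?D r)"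
  have "b m = (\<Sum>r<n. \<Sum>i<n. \<Sum>l<n. ?D r i * ?D r l * \<Omega> $$ (i, l))"
    using b_coef_eq[OF m] proj_form_increment[OF m] by simp
  also have "\<dots> = (\<Sum>r<n. ?v r \<bullet> (\<Omega> *\<^sub>v ?v r))"
    by (intro sum.cong refl, subst scalar_prod_mult_mat_vec_sum[OF Omega_carrier])
      (auto simp: sum_distrib_left mult_ac intro!: sum.cong)
  finally have b_eq: "b m = (\<Sum>r<n. ?v r \<bullet> (\<Omega> *\<^sub>v ?v r))" .
  \<comment> \<open>The increment P_m - P_{m-1} has trace \<nu>_m - \<nu>_{m-1} > 0, so one of its rows is nonzero.\<close>
  have "(\<Sum>r<n. ?D r r) = real (\<nu> m) - real (\<nu> (m - 1))"
    using P_trace[OF m(2)] P_trace[OF m1] P_carrier[OF m(2)] P_carrier[OF m1]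
    by (simp add: trace_mat_carrier[of _ n] sum_subtractf)
  moreover have "\<nu> (m - 1) < \<nu> m" using nu_less[of "m - 1" m] m by simp
  ultimately have "(\<Sum>r<n. ?D r r) \<noteq> 0" by simp
  then obtain r where r: "r < n" "?D r r \<noteq> 0"
    by (meson sum.neutral lessThan_iff)
  have "?v r \<noteq> 0\<^sub>v n"
  proof
    assume "?v r = 0\<^sub>v n"
    then have "?v r $ r = 0\<^sub>v n $ r" by simp
    then show False using r by simp
  qed
  then have "0 < ?v r \<bullet> (\<Omega> *\<^sub>v ?v r)"
    by (intro Omega_quadratic_pos) simp
  moreover have "0 \<le> ?v s \<bullet> (\<Omega> *\<^sub>v ?v s)" for s
    by (intro Omega_quadratic_nonneg) simp
  ultimately show ?thesis
    unfolding b_eq using r(1) by (intro sum_pos2[of "{..<n}" r]) auto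
qed


definition avg_proj :: "(nat \<Rightarrow> real) \<Rightarrow> nat \<Rightarrow> nat \<Rightarrow> real" where
  "avg_proj w i k = (\<Sum>m\<in>{1..M}. w m * P m $$ (i, k))"

lemma risk_weight_eq_moments:
  "R w = (\<Sum>i<n. ((\<Sum>k<n. avg_proj w i k * mu $ k) - mu $ i)\<^sup>2)
       + (\<Sum>i<n. \<Sum>k<n. \<Sum>l<n. avg_proj w i k * avg_proj w i l * \<Omega> $$ (k, l))"
proof -
  let ?u = "\<lambda>i. (\<Sum>k<n. avg_proj w i k * mu $ k) - mu $ i"
  have "(\<Sum>i<n. (vec n (\<lambda>i. \<Sum>m\<in>{1..M}. w m * (P m *\<^sub>v (mu + eps \<omega>)) $ i) $ i - mu $ i)\<^sup>2)
      = (\<Sum>i<n. (?u i + (\<Sum>k<n. avg_proj w i k * eps \<omega> $ k))\<^sup>2)" if \<omega>: "\<omega> \<in> space Pr" for \<omega>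
  proof (intro sum.cong refl)
    fix i assume "i \<in> {..<n}"
    then have i: "i < n" by simp
    have e: "eps \<omega> \<in> carrier_vec n" using eps_carrier \<omega> by auto
    have "(\<Sum>m\<in>{1..M}. w m * (P m *\<^sub>v (mu + eps \<omega>)) $ i)
        = (\<Sum>m\<in>{1..M}. w m * (\<Sum>k<n. P m $$ (i, k) * (mu $ k + eps \<omega> $ k)))"
      using index_mult_mat_vec_sum[OF P_carrier _ i] e mu_carrier M_le_q by (intro sum.cong refl) simp
    also have "\<dots> = (\<Sum>k<n. avg_proj w i k * mu $ k) + (\<Sum>k<n. avg_proj w i k * eps \<omega> $ k)"
      unfolding avg_proj_def
      by (simp add: sum_distrib_left sum_distrib_right distrib_left sum.distrib mult_ac)
        (simp add: sum.swap[where A = "{..<n}"])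
    finally show "(vec n (\<lambda>i. \<Sum>m\<in>{1..M}. w m * (P m *\<^sub>v (mu + eps \<omega>)) $ i) $ i - mu $ i)\<^sup>2
        = (?u i + (\<Sum>k<n. avg_proj w i k * eps \<omega> $ k))\<^sup>2"
      using i by (simp add: algebra_simps)
  qed
  then have "R w = integral\<^sup>L Pr (\<lambda>\<omega>. \<Sum>i<n. (?u i + (\<Sum>k<n. avg_proj w i k * eps \<omega> $ k))\<^sup>2)"
    unfolding risk_weight_def risk_def Let_def dim_row_X mu_def[symmetric]
    by (rule Bochner_Integration.integral_cong[OF refl])
  also have "\<dots> = (\<Sum>i<n. (?u i)\<^sup>2) + (\<Sum>i<n. \<Sum>k<n. \<Sum>l<n. avg_proj w i k * avg_proj w i l * \<Omega> $$ (k, l))"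
    by (rule expectation_sum_square_affine[OF prob eps_moments eps_cov])
  finally show ?thesis .
qed

lemma quadratic_form_avg_proj:
  "(\<Sum>i<n. \<Sum>k<n. \<Sum>l<n. avg_proj w i k * avg_proj w i l * W k l)
     = (\<Sum>m\<in>{1..M}. (proj_form W m - proj_form W (m - 1)) * (tail_sum w M m)\<^sup>2)"
proof -
  have "(\<Sum>i<n. \<Sum>k<n. \<Sum>l<n. avg_proj w i k * avg_proj w i l * W k l)
      = (\<Sum>j\<in>{1..M}. \<Sum>j'\<in>{1..M}. w j * w j' *
           (\<Sum>i<n. \<Sum>k<n. \<Sum>l<n. P j $$ (i, k) * P j' $$ (i, l) * W k l))"
    unfolding avg_proj_def by (rule triple_sum_weighted_products)
  also have "\<dots> = (\<Sum>j\<in>{1..M}. \<Sum>j'\<in>{1..M}. w j * w j' * proj_form W (min j j'))"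
    using M_le_q by (intro sum.cong refl) (simp add: sum_rows_proj_form)
  also have "\<dots> = (\<Sum>m\<in>{1..M}. (proj_form W m - proj_form W (m - 1)) * (tail_sum w M m)\<^sup>2)"
    by (rule double_sum_min_eq_sum_increments_tail_sum[where f = "proj_form W", OF proj_form_0])
  finally show ?thesis .
qed

lemma cross_term_avg_proj:
  "(\<Sum>i<n. mu $ i * (\<Sum>k<n. avg_proj w i k * mu $ k)) = (\<Sum>m\<in>{1..M}. a m * tail_sum w M m)"
proof -
  have "(\<Sum>i<n. mu $ i * (\<Sum>k<n. avg_proj w i k * mu $ k))
      = (\<Sum>i<n. \<Sum>k<n. \<Sum>j\<in>{1..M}. w j * (P j $$ (i, k) * (mu $ i * mu $ k)))"
    unfolding avg_proj_def by (simp add: sum_distrib_left sum_distrib_right mult_ac)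
  also have "\<dots> = (\<Sum>j\<in>{1..M}. \<Sum>i<n. \<Sum>k<n. w j * (P j $$ (i, k) * (mu $ i * mu $ k)))"
    by (rule sum_swap3[symmetric])
  also have "\<dots> = (\<Sum>j\<in>{1..M}. w j * mu_form j)"
    by (simp add: proj_form_def sum_distrib_left)
  also have "\<dots> = (\<Sum>m\<in>{1..M}. (mu_form m - mu_form (m - 1)) * tail_sum w M m)"
    by (rule sum_mult_eq_sum_increments_tail_sum[where f = mu_form, OF proj_form_0])
  also have "\<dots> = (\<Sum>m\<in>{1..M}. a m * tail_sum w M m)"
    using M_le_q by (intro sum.cong refl) (simp add: a_coef_eq)
  finally show ?thesis .
qed

definition base_risk :: real where
  "base_risk = trace_mat (P 1 * \<Omega>) + mu \<bullet> ((1\<^sub>m n - P M) *\<^sub>v mu)"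

lemma risk_weight_eq_block_risks:
  assumes w: "w \<in> weights M"
  shows "R w = base_risk + (\<Sum>m\<in>{2..M}. block_risk (a m) (b m) (tail_sum w M m))"
proof -
  let ?T = "tail_sum w M"
  have signal: "(\<Sum>i<n. (\<Sum>k<n. avg_proj w i k * mu $ k)\<^sup>2) = (\<Sum>m\<in>{1..M}. a m * (?T m)\<^sup>2)"
    using quadratic_form_avg_proj[of w "\<lambda>k l. mu $ k * mu $ l"] M_le_q
    by (simp add: power2_eq_square sum_product mult_ac a_coef_eq)
  have noise: "(\<Sum>i<n. \<Sum>k<n. \<Sum>l<n. avg_proj w i k * avg_proj w i l * \<Omega> $$ (k, l))
      = (\<Sum>m\<in>{1..M}. b m * (?T m)\<^sup>2)"
    using quadratic_form_avg_proj[of w "\<lambda>k l. \<Omega> $$ (k, l)"] M_le_q by (simp add: b_coef_eq)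
  have mu_mu: "mu \<bullet> mu = (\<Sum>i<n. (mu $ i)\<^sup>2)"
    using mu_carrier by (simp add: scalar_prod_def power2_eq_square atLeast0LessThan)
  have "R w = (\<Sum>m\<in>{1..M}. a m * (?T m)\<^sup>2) - 2 * (\<Sum>m\<in>{1..M}. a m * ?T m) + mu \<bullet> mu
      + (\<Sum>m\<in>{1..M}. b m * (?T m)\<^sup>2)"
    unfolding risk_weight_eq_moments noise mu_mu signal[symmetric] cross_term_avg_proj[symmetric]
    by (simp add: power2_diff sum.distrib sum_subtractf sum_distrib_left mult_ac)
  also have "\<dots> = (mu \<bullet> mu - (\<Sum>m\<in>{1..M}. a m)) + (\<Sum>m\<in>{1..M}. block_risk (a m) (b m) (?T m))"
    by (simp add: block_risk_def power2_diff sum.distrib sum_subtractf sum_distrib_left algebra_simps)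
  also have "(\<Sum>m\<in>{1..M}. a m) = (\<Sum>m\<in>{1..M}. mu_form m - mu_form (m - 1))"
    using M_le_q by (intro sum.cong refl) (simp add: a_coef_eq)
  also have "\<dots> = mu_form M"
    by (rule sum_increments_telescope[where f = mu_form, OF proj_form_0])
  also have "mu \<bullet> mu - mu_form M = mu \<bullet> ((1\<^sub>m n - P M) *\<^sub>v mu)"
  proof -
    have PM: "P M \<in> carrier_mat n n" using P_carrier M_le_q by simp
    then have "P M *\<^sub>v mu \<in> carrier_vec n" using mu_carrier by simp
    then show ?thesis
      using minus_mult_distrib_mat_vec[OF one_carrier_mat PM mu_carrier] mu_carrier
        scalar_prod_minus_distrib[OF mu_carrier mu_carrier] scalar_prod_P_mu[OF M_le_q]
      by simp
  qed
  also have "(\<Sum>m\<in>{1..M}. block_risk (a m) (b m) (?T m))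
      = trace_mat (P 1 * \<Omega>) + (\<Sum>m\<in>{2..M}. block_risk (a m) (b m) (?T m))"
  proof -
    have "b 1 = trace_mat (P 1 * \<Omega>)"
      using b_coef_eq[of 1] trace_P_Omega[of 1] proj_form_0 M_ge_2 M_le_q by simp
    then show ?thesis
      using M_ge_2 tail_sum_first_weights[OF w]
      by (simp add: sum.atLeast_Suc_atMost numeral_2_eq_2 block_risk_def)
  qed
  finally show ?thesis by (simp add: base_risk_def)
qed

end

section \<open>Optimal weights\<close>

locale nested_regression_ordered = nested_regression +
  assumes theta_antimono: "\<forall>m\<in>{1..<q}. theta X \<nu> \<beta> \<Omega> m \<ge> theta X \<nu> \<beta> \<Omega> (Suc m)"
begin

abbreviation \<gamma> :: "nat \<Rightarrow> real" where "\<gamma> m \<equiv> gamma_star X \<nu> \<beta> \<Omega> m"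
abbreviation mz :: "real \<Rightarrow> nat" where "mz \<equiv> m_of X \<nu> \<beta> \<Omega> q"

lemma gamma_eq: "2 \<le> m \<Longrightarrow> \<gamma> m = a m / (a m + b m)"
  by (simp add: gamma_star_def)

lemma gamma_range: "2 \<le> m \<Longrightarrow> m \<le> q \<Longrightarrow> 0 \<le> \<gamma> m \<and> \<gamma> m < 1"
  using a_nonneg[of m] b_pos[of m] by (simp add: gamma_eq field_simps)

lemma gamma_step: "2 \<le> m \<Longrightarrow> Suc m \<le> q \<Longrightarrow> \<gamma> (Suc m) \<le> \<gamma> m"
proof -
  assume m: "2 \<le> m" "Suc m \<le> q"
  have "a (Suc m) / (real n * b (Suc m)) \<le> a m / (real n * b m)"
    using theta_antimono m by (auto simp: theta_def)
  moreover have "0 < b m" "0 < b (Suc m)" "0 \<le> a m" "0 \<le> a (Suc m)"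
    using b_pos a_nonneg m by auto
  moreover have "0 < real n" using p_less_n by simp
  ultimately have "a (Suc m) * b m \<le> a m * b (Suc m)"
    by (simp add: divide_simps mult_ac)
  with \<open>0 < b m\<close> \<open>0 < b (Suc m)\<close> \<open>0 \<le> a m\<close> \<open>0 \<le> a (Suc m)\<close> show ?thesis
    using m by (simp add: gamma_eq divide_simps algebra_simps)
qed

lemma gamma_antimono:
  assumes "2 \<le> m" "m \<le> m'" "m' \<le> q"
  shows "\<gamma> m' \<le> \<gamma> m"
  using assms(2,3)
proof (induction m' rule: dec_induct)
  case (step k)
  then show ?case using gamma_step[of k] assms(1) by simp
qed simp

lemma theta_gt_iff:
  assumes "2 \<le> m" "m \<le> q" "0 < z" "z < 1"
  shows "z / ((1 - z) * real n) < theta X \<nu> \<beta> \<Omega> m \<longleftrightarrow> z < \<gamma> m"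
proof -
  have "0 < b m" "0 \<le> a m" "0 < real n"
    using b_pos a_nonneg assms p_less_n by auto
  then have "z / ((1 - z) * real n) < a m / (real n * b m) \<longleftrightarrow> z * b m < a m * (1 - z)"
    using assms by (simp add: divide_simps mult_ac)
  also have "\<dots> \<longleftrightarrow> z < \<gamma> m"
    using \<open>0 < b m\<close> \<open>0 \<le> a m\<close> assms by (simp add: gamma_eq divide_simps algebra_simps)
  finally show ?thesis by (simp add: theta_def)
qed

lemma m_of_eq_Max: "0 < z \<Longrightarrow> mz z = Max ({1} \<union> {m \<in> {2..q}. z < \<gamma> m})"
proof (cases "1 \<le> z")
  case True
  have no_gamma: "{m \<in> {2..q}. z < \<gamma> m} = {}"
    using gamma_range True by force
  show ?thesis
    unfolding m_of_def no_gamma using True by simp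
next
  case False
  assume "0 < z"
  then have "{m \<in> {2..q}. z / ((1 - z) * real (dim_row X)) < theta X \<nu> \<beta> \<Omega> m}
      = {m \<in> {2..q}. z < \<gamma> m}"
    using False theta_gt_iff by auto
  then show ?thesis using False by (simp add: m_of_def)
qed

lemma m_of_bounds: "0 < z \<Longrightarrow> 1 \<le> mz z \<and> mz z \<le> q"
  using Max_in[of "{1} \<union> {m \<in> {2..q}. z < \<gamma> m}"] M_ge_2 M_le_q
  by (auto simp: m_of_eq_Max)

lemma le_m_of_iff:
  assumes z: "0 < z" and m: "2 \<le> m" "m \<le> q"
  shows "m \<le> mz z \<longleftrightarrow> z < \<gamma> m"
proof
  assume "m \<le> mz z"
  then have "mz z \<in> {m \<in> {2..q}. z < \<gamma> m}"
    using Max_in[of "{1} \<union> {m \<in> {2..q}. z < \<gamma> m}"] m by (auto simp: m_of_eq_Max[OF z])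
  then show "z < \<gamma> m"
    using gamma_antimono[OF m(1) \<open>m \<le> mz z\<close>] by auto
next
  assume "z < \<gamma> m"
  then show "m \<le> mz z"
    using m by (simp add: m_of_eq_Max[OF z])
qed

lemma block_risk_eq_gamma:
  "2 \<le> m \<Longrightarrow> m \<le> q \<Longrightarrow>
    block_risk (a m) (b m) t = (a m + b m) * (t - \<gamma> m)\<^sup>2 + a m * b m / (a m + b m)"
  using a_nonneg[of m] b_pos[of m] by (simp add: block_risk_complete_square gamma_eq)

lemma block_risk_ge_gamma:
  "2 \<le> m \<Longrightarrow> m \<le> q \<Longrightarrow> block_risk (a m) (b m) (\<gamma> m) \<le> block_risk (a m) (b m) t"
  using a_nonneg[of m] b_pos[of m] by (simp add: block_risk_eq_gamma)

lemma risk_weight_min_eq: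
  assumes "ws \<in> weights M" "\<forall>v\<in>weights M. R ws \<le> R v"
  shows "R ws = base_risk + (\<Sum>m\<in>{2..M}. block_risk (a m) (b m) (\<gamma> m))"
proof -
  let ?opt = "base_risk + (\<Sum>m\<in>{2..M}. block_risk (a m) (b m) (\<gamma> m))"
  have lower: "?opt \<le> R v" if "v \<in> weights M" for v
    unfolding risk_weight_eq_block_risks[OF that]
    using M_le_q by (auto intro!: sum_mono block_risk_ge_gamma)
  \<comment> \<open>Assumption 3 makes \<gamma> antitone, so it is the tail-sum sequence of a weight vector.\<close>
  let ?w = "weight_of_tails M \<gamma>"
  have "\<forall>m\<in>{2..M}. 0 \<le> \<gamma> m \<and> \<gamma> m \<le> 1" "\<forall>m\<in>{2..<M}. \<gamma> (Suc m) \<le> \<gamma> m"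
    using gamma_range gamma_step M_le_q by (auto simp: less_imp_le)
  then have w: "?w \<in> weights M" "\<forall>m\<in>{2..M}. tail_sum ?w M m = \<gamma> m"
    using weight_of_tails_in_weights[of M \<gamma>] tail_sum_weight_of_tails[of _ M \<gamma>] M_ge_2
    by (auto simp: tail_extension_def)
  then have "R ?w = ?opt"
    by (simp add: risk_weight_eq_block_risks)
  then show ?thesis
    using assms lower w(1) by (metis order_antisym)
qed

end

locale grid_averaging = nested_regression_ordered +
  fixes N :: nat
  assumes N_pos: "0 < N"
begin

abbreviation grid_gamma :: "nat \<Rightarrow> int" where "grid_gamma m \<equiv> grid_round N (\<gamma> m)"

lemma grid_gamma_bounds: "2 \<le> m \<Longrightarrow> m \<le> q \<Longrightarrow> 0 \<le> grid_gamma m \<and> grid_gamma m \<le> int N"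
  using grid_round_bounds[of "\<gamma> m" N] gamma_range[of m] by auto

lemma grid_gamma_antimono: "2 \<le> m \<Longrightarrow> m \<le> m' \<Longrightarrow> m' \<le> q \<Longrightarrow> grid_gamma m' \<le> grid_gamma m"
  using gamma_antimono by (simp add: grid_round_mono)

lemma risk_weight_grid_min_eq:
  assumes "w \<in> weights_grid M N" "\<forall>v\<in>weights_grid M N. R w \<le> R v"
  shows "R w = base_risk + (\<Sum>m\<in>{2..M}. block_risk (a m) (b m) (real_of_int (grid_gamma m) / real N))"
proof -
  let ?g = "\<lambda>m. real_of_int (grid_gamma m) / real N"
  let ?opt = "base_risk + (\<Sum>m\<in>{2..M}. block_risk (a m) (b m) (?g m))"
  have lower: "?opt \<le> R v" if v: "v \<in> weights_grid M N" for v
  proof -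
    have "block_risk (a m) (b m) (?g m) \<le> block_risk (a m) (b m) (tail_sum v M m)"
      if m: "m \<in> {2..M}" for m
    proof -
      obtain k :: int where k: "tail_sum v M m = real_of_int k / real N"
        using tail_sum_weights_grid[OF v] .
      have "0 \<le> a m + b m" using a_nonneg[of m] b_pos[of m] m M_le_q by simp
      then show ?thesis
        using m M_le_q grid_round_nearest[OF N_pos, of "\<gamma> m" k]
        by (simp add: block_risk_eq_gamma k mult_left_mono)
    qed
    then show ?thesis
      using v by (auto simp: risk_weight_eq_block_risks weights_grid_def intro!: sum_mono)
  qed
  let ?w = "weight_of_tails M ?g"
  have "0 \<le> ?g m \<and> ?g m \<le> 1" if "m \<in> {2..M}" for m
  proof -
    have "0 \<le> grid_gamma m" "grid_gamma m \<le> int N"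
      using grid_gamma_bounds[of m] that M_le_q by auto
    then have "0 \<le> real_of_int (grid_gamma m)" "real_of_int (grid_gamma m) \<le> real N"
      by (simp, metis of_int_le_iff of_int_of_nat_eq)
    then show ?thesis using N_pos by (simp add: divide_le_eq_1_pos)
  qed
  moreover have "?g (Suc m) \<le> ?g m" if "m \<in> {2..<M}" for m
    using grid_gamma_antimono[of m "Suc m"] M_le_q that by (simp add: divide_right_mono)
  ultimately have "\<forall>m\<in>{2..M}. 0 \<le> ?g m \<and> ?g m \<le> 1" "\<forall>m\<in>{2..<M}. ?g (Suc m) \<le> ?g m"
    by auto
  then have w: "?w \<in> weights_grid M N" "\<forall>m\<in>{2..M}. tail_sum ?w M m = ?g m"
    using weight_of_tails_in_weights_grid[of M ?g N] tail_sum_weight_of_tails[of _ M ?g] M_ge_2 N_pos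
    by (auto simp: tail_extension_def)
  then have "R ?w = ?opt"
    by (simp add: risk_weight_eq_block_risks weights_grid_def)
  then show ?thesis
    using assms lower w(1) by (metis order_antisym)
qed

lemma le_m_of_iff_less_grid_gamma:
  assumes "0 \<le> i" "2 \<le> m" "m \<le> q"
  shows "m \<le> mz ((2 * real_of_int i + 1) / (2 * real N)) \<longleftrightarrow> i < grid_gamma m"
proof -
  have "0 < (2 * real_of_int i + 1) / (2 * real N)"
    using assms(1) N_pos by simp
  then show ?thesis
    using le_m_of_iff[OF _ assms(2,3)] less_grid_round_iff[OF N_pos] by simp
qed

lemma le_m_of_iff_le_grid_gamma:
  assumes "1 \<le> i" "2 \<le> m" "m \<le> q"
  shows "m \<le> mz ((2 * real_of_int i - 1) / (2 * real N)) \<longleftrightarrow> i \<le> grid_gamma m"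
proof -
  have "0 < (2 * real_of_int i - 1) / (2 * real N)"
    using assms(1) N_pos by simp
  then show ?thesis
    using le_m_of_iff[OF _ assms(2,3)] le_grid_round_iff[OF N_pos] by simp
qed

lemma m_of_block_eq:
  assumes i: "i \<in> {grid_gamma M + 1..int N}"
  shows "{mz ((2 * real_of_int i + 1) / (2 * real N)) + 1 .. mz ((2 * real_of_int i - 1) / (2 * real N))}
       = {m \<in> {2..M}. grid_gamma m = i}"
proof -
  let ?hi = "mz ((2 * real_of_int i - 1) / (2 * real N))"
  let ?lo = "mz ((2 * real_of_int i + 1) / (2 * real N))"
  have i1: "1 \<le> i" using i grid_gamma_bounds[of M] M_ge_2 M_le_q by auto
  have "?hi \<le> q" "1 \<le> ?lo"
    using m_of_bounds i1 N_pos by (simp_all add: add_pos_pos)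
  show ?thesis
  proof (intro Set.set_eqI iffI)
    fix m assume m: "m \<in> {?lo + 1 .. ?hi}"
    then have m2: "2 \<le> m" "m \<le> q" using \<open>?hi \<le> q\<close> \<open>1 \<le> ?lo\<close> by auto
    have "i \<le> grid_gamma m" "\<not> i < grid_gamma m"
      using m le_m_of_iff_le_grid_gamma[OF i1 m2] le_m_of_iff_less_grid_gamma[of i m] m2 i1 by auto
    moreover have "m \<le> M"
      using grid_gamma_antimono[OF M_ge_2 _ m2(2)] i \<open>i \<le> grid_gamma m\<close>
      by (cases "M \<le> m") auto
    ultimately show "m \<in> {m \<in> {2..M}. grid_gamma m = i}" using m2 by auto
  next
    fix m assume m: "m \<in> {m \<in> {2..M}. grid_gamma m = i}"
    then have m2: "2 \<le> m" "m \<le> q" using M_le_q by auto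
    then show "m \<in> {?lo + 1 .. ?hi}"
      using m le_m_of_iff_le_grid_gamma[OF i1 m2] le_m_of_iff_less_grid_gamma[of i m] i1 by auto
  qed
qed

lemma m_of_last_block_eq:
  "{mz ((2 * real_of_int (grid_gamma M) + 1) / (2 * real N)) + 1 .. M}
     = {m \<in> {2..M}. grid_gamma m = grid_gamma M}"
proof -
  let ?lo = "mz ((2 * real_of_int (grid_gamma M) + 1) / (2 * real N))"
  have i0: "0 \<le> grid_gamma M" using grid_gamma_bounds M_ge_2 M_le_q by simp
  have "1 \<le> ?lo" using m_of_bounds i0 N_pos by simp
  show ?thesis
  proof (intro Set.set_eqI iffI)
    fix m assume m: "m \<in> {?lo + 1 .. M}"
    then have m2: "2 \<le> m" "m \<le> q" using \<open>1 \<le> ?lo\<close> M_le_q by auto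
    have "\<not> grid_gamma M < grid_gamma m"
      using m le_m_of_iff_less_grid_gamma[OF i0 m2] by auto
    moreover have "grid_gamma M \<le> grid_gamma m"
      using grid_gamma_antimono[OF m2(1) _ M_le_q] m by auto
    ultimately show "m \<in> {m \<in> {2..M}. grid_gamma m = grid_gamma M}" using m m2 by auto
  next
    fix m assume m: "m \<in> {m \<in> {2..M}. grid_gamma m = grid_gamma M}"
    then have m2: "2 \<le> m" "m \<le> q" using M_le_q by auto
    then show "m \<in> {?lo + 1 .. M}"
      using m le_m_of_iff_less_grid_gamma[OF i0 m2] by auto
  qed
qed

lemma sum_by_grid_level:
  "(\<Sum>m\<in>{2..M}. h (grid_gamma m) m) =
     (\<Sum>i\<in>{grid_gamma M + 1..int N}.
        \<Sum>m\<in>{mz ((2 * real_of_int i + 1) / (2 * real N)) + 1 .. mz ((2 * real_of_int i - 1) / (2 * real N))}. h i m)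
     + (\<Sum>m\<in>{mz ((2 * real_of_int (grid_gamma M) + 1) / (2 * real N)) + 1 .. M}. h (grid_gamma M) m)"
proof -
  have "grid_gamma ` {2..M} \<subseteq> {grid_gamma M..int N}"
    using grid_gamma_bounds grid_gamma_antimono M_le_q by fastforce
  then have "(\<Sum>m\<in>{2..M}. h (grid_gamma m) m)
      = (\<Sum>i\<in>{grid_gamma M + 1..int N}. \<Sum>m\<in>{m \<in> {2..M}. grid_gamma m = i}. h i m)
        + (\<Sum>m\<in>{m \<in> {2..M}. grid_gamma m = grid_gamma M}. h (grid_gamma M) m)"
    by (intro sum_group_by_level) auto
  also have "(\<Sum>i\<in>{grid_gamma M + 1..int N}. \<Sum>m\<in>{m \<in> {2..M}. grid_gamma m = i}. h i m)
      = (\<Sum>i\<in>{grid_gamma M + 1..int N}.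
           \<Sum>m\<in>{mz ((2 * real_of_int i + 1) / (2 * real N)) + 1 .. mz ((2 * real_of_int i - 1) / (2 * real N))}. h i m)"
    by (intro sum.cong refl) (simp only: m_of_block_eq)
  finally show ?thesis
    by (simp only: m_of_last_block_eq)
qed

lemma grid_min_risk_blocks:
  assumes "w \<in> weights_grid M N" "\<forall>v\<in>weights_grid M N. R w \<le> R v"
  shows "R w = base_risk
    + (\<Sum>i\<in>{grid_gamma M + 1..int N}.
         \<Sum>m\<in>{mz ((2 * real_of_int i + 1) / (2 * real N)) + 1 .. mz ((2 * real_of_int i - 1) / (2 * real N))}.
           block_risk (a m) (b m) (real_of_int i / real N))
    + (\<Sum>m\<in>{mz ((2 * real_of_int (grid_gamma M) + 1) / (2 * real N)) + 1 .. M}.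
           block_risk (a m) (b m) (real_of_int (grid_gamma M) / real N))"
  using risk_weight_grid_min_eq[OF assms]
    sum_by_grid_level[where h = "\<lambda>i m. block_risk (a m) (b m) (real_of_int i / real N)"]
  by simp

lemma grid_min_risk_excess:
  assumes "w \<in> weights_grid M N" "\<forall>v\<in>weights_grid M N. R w \<le> R v"
    and "ws \<in> weights M" "\<forall>v\<in>weights M. R ws \<le> R v"
  shows "R w = R ws + (\<Sum>m\<in>{2..M}. (a m + b m) *
                 (\<Sum>i\<in>{0..N}. (real i / real N - \<gamma> m)\<^sup>2 *
                    (if (2 * real i - 1) / (2 * real N) < \<gamma> m \<and> \<gamma> m \<le> (2 * real i + 1) / (2 * real N)
                     then 1 else 0)))"
proof -
  have "block_risk (a m) (b m) (real_of_int (grid_gamma m) / real N)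
      = block_risk (a m) (b m) (\<gamma> m) + (a m + b m) *
          (\<Sum>i\<in>{0..N}. (real i / real N - \<gamma> m)\<^sup>2 *
             (if (2 * real i - 1) / (2 * real N) < \<gamma> m \<and> \<gamma> m \<le> (2 * real i + 1) / (2 * real N)
              then 1 else 0))"
    if "m \<in> {2..M}" for m
    using that M_le_q gamma_range[of m]
    by (simp add: block_risk_eq_gamma sum_nearest_grid_indicator[OF N_pos])
  then show ?thesis
    using risk_weight_grid_min_eq[OF assms(1,2)] risk_weight_min_eq[OF assms(3,4)]
    by (simp add: sum.distrib)
qed

end

theorem lemmaA1:
  fixes X :: "nat \<Rightarrow> real mat" and p q Mn :: "nat \<Rightarrow> nat" and \<nu> :: "nat \<Rightarrow> nat \<Rightarrow> nat"
    and \<beta> :: "nat \<Rightarrow> real vec" and \<Omega> :: "nat \<Rightarrow> real mat"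
    and Pr :: "nat \<Rightarrow> 'a measure" and eps :: "nat \<Rightarrow> 'a \<Rightarrow> real vec"
    and N :: nat
  assumes setting: "\<forall>\<^sub>F n in sequentially.
      X n \<in> carrier_mat n (p n) \<and> p n < n \<and>
      \<nu> n 0 = 0 \<and> (\<forall>m<q n. \<nu> n m < \<nu> n (Suc m)) \<and> \<nu> n (q n) = p n \<and>
      (\<forall>m\<in>{1..q n}. \<forall>v\<in>carrier_vec (\<nu> n m).
          firstcols (X n) (\<nu> n m) *\<^sub>v v = 0\<^sub>v n \<longrightarrow> v = 0\<^sub>v (\<nu> n m)) \<and>
      2 \<le> Mn n \<and> Mn n \<le> q n \<and>
      \<beta> n \<in> carrier_vec (p n) \<and>
      \<Omega> n \<in> carrier_mat n n \<and> pos_def_mat (\<Omega> n) \<and>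
      prob_space (Pr n) \<and>
      (\<forall>\<omega>\<in>space (Pr n). eps n \<omega> \<in> carrier_vec n) \<and>
      (\<forall>i<n. (\<lambda>\<omega>. eps n \<omega> $ i) \<in> borel_measurable (Pr n) \<and>
             integrable (Pr n) (\<lambda>\<omega>. (eps n \<omega> $ i)\<^sup>2) \<and>
             integral\<^sup>L (Pr n) (\<lambda>\<omega>. eps n \<omega> $ i) = 0) \<and>
      (\<forall>i<n. \<forall>j<n. integral\<^sup>L (Pr n) (\<lambda>\<omega>. eps n \<omega> $ i * eps n \<omega> $ j) = \<Omega> n $$ (i, j))"
  and assm3: "\<forall>\<^sub>F n in sequentially. \<forall>m\<in>{1..<q n}.
      theta (X n) (\<nu> n) (\<beta> n) (\<Omega> n) m \<ge> theta (X n) (\<nu> n) (\<beta> n) (\<Omega> n) (Suc m)"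
  and assm6: "\<forall>\<^sub>F n in sequentially.
      (let d = d_idx (X n) (\<nu> n) (\<beta> n) (\<Omega> n) (q n);
           R = risk_model (Pr n) (eps n) (X n) (\<nu> n) (\<beta> n) in
       \<exists>m'\<in>{1..d - 1}. (\<forall>m\<in>{2..m'}. R m < R (m - 1)) \<and>
                       (\<forall>m\<in>{m' + 1..d}. R m \<ge> R (m - 1)) \<and>
                       R d > R (d - 1))"
  and N_pos: "0 < N"
  shows "\<forall>\<^sub>F n in sequentially.
    (let M = Mn n;
         R = risk_weight (Pr n) (eps n) (X n) (\<nu> n) (\<beta> n) M;
         a = a_coef (X n) (\<nu> n) (\<beta> n);
         b = b_coef (X n) (\<nu> n) (\<Omega> n);
         \<gamma> = gamma_star (X n) (\<nu> n) (\<beta> n) (\<Omega> n);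
         mz = m_of (X n) (\<nu> n) (\<beta> n) (\<Omega> n) (q n);
         iN = i_idx (X n) (\<nu> n) (\<beta> n) (\<Omega> n) M N;
         \<mu> = X n *\<^sub>v \<beta> n;
         isminN = (\<lambda>w. w \<in> weights_grid M N \<and> (\<forall>v\<in>weights_grid M N. R w \<le> R v));
         ismin = (\<lambda>w. w \<in> weights M \<and> (\<forall>v\<in>weights M. R w \<le> R v))
     in
     (\<forall>w. isminN w \<longrightarrow>
        R w = trace_mat (Pm (X n) (\<nu> n) 1 * \<Omega> n)
              + \<mu> \<bullet> ((1\<^sub>m n - Pm (X n) (\<nu> n) M) *\<^sub>v \<mu>)
              + (\<Sum>i\<in>{iN + 1..int N}.
                   \<Sum>m\<in>{mz ((2 * real_of_int i + 1) / (2 * real N)) + 1 ..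
                          mz ((2 * real_of_int i - 1) / (2 * real N))}.
                     (real_of_int i / real N)\<^sup>2 * b m + (1 - real_of_int i / real N)\<^sup>2 * a m)
              + (\<Sum>m\<in>{mz ((2 * real_of_int iN + 1) / (2 * real N)) + 1 .. M}.
                     (real_of_int iN / real N)\<^sup>2 * b m + (1 - real_of_int iN / real N)\<^sup>2 * a m))
     \<and>
     (\<forall>w ws. isminN w \<longrightarrow> ismin ws \<longrightarrow>
        R w = R ws + (\<Sum>m\<in>{2..M}. (a m + b m) *
                 (\<Sum>i\<in>{0..N}. (real i / real N - \<gamma> m)\<^sup>2 *
                    (if (2 * real i - 1) / (2 * real N) < \<gamma> m \<and> \<gamma> m \<le> (2 * real i + 1) / (2 * real N)
                     then 1 else 0)))))"
  using eventually_conj[OF setting assm3]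
proof eventually_elim
  case (elim n)
  interpret grid_averaging "X n" n "p n" "q n" "Mn n" "\<nu> n" "\<beta> n" "\<Omega> n" "Pr n" "eps n" N
    using elim N_pos
    by (intro grid_averaging.intro grid_averaging_axioms.intro nested_regression_ordered.intro
        nested_regression_ordered_axioms.intro nested_regression.intro) simp_all
  have iN: "i_idx (X n) (\<nu> n) (\<beta> n) (\<Omega> n) (Mn n) N = grid_gamma (Mn n)"
    by (simp add: i_idx_def grid_round_def)
  show ?case
    using grid_min_risk_blocks grid_min_risk_excess
    unfolding Let_def iN base_risk_def mu_def block_risk_def
    by blast
qed

end
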